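(* For $k>0$ and $\varepsilon\in\mathbb{R}$ consider the initial value problem $$\Delta^3u=-\frac{1}{u^3},\quad u(0)=k,\quad \Delta u(0)=-\varepsilon,\quad \Delta^2u(0)=1,\quad u'(0)=(\Delta u)'(0)=(\Delta^2u)'(0)=0, \tag{P}$$ and let $S_k:=\{\varepsilon>0:\ \text{(P) has a positive entire radial solution}\}$. There exists $k_0>0$ such that for every $k\ge k_0$ the set $S_k$ is nonempty and bounded above, and, writing $\varepsilon_k^*:=\sup S_k$, problem (P) with $\varepsilon=\varepsilon_k^*$ has a positive entire radial solution.
   Context: A radial function on $\mathbb{R}^3$ is written $u(r)$, $r=|x|$; for radial functions $\Delta w=w''+\frac{2}{r}w'$. A positive entire radial solution is a smooth radial function defined and positive on all of $\mathbb{R}^3$ solving the ODE with the given initial data at $r=0$. *)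

theory Defs
  imports "HOL-Analysis.Analysis"
begin

text \<open>A radial function on R^3 is represented by its profile u : real => real,
  extended evenly to the whole real line (u(-r) = u(r)); smoothness of the radial
  function on R^3 corresponds to smoothness of this even profile on R.\<close>

definition smooth_fun :: "(real \<Rightarrow> real) \<Rightarrow> bool" where
  "smooth_fun u \<longleftrightarrow> (\<forall>n x. ((deriv ^^ n) u) differentiable (at x))"

text \<open>Radial Laplacian in R^3: w'' + (2/r) w' for r > 0; at the origin
  (for an even C^2 profile) its value is the limit 3 w''(0).\<close>

definition rlap :: "(real \<Rightarrow> real) \<Rightarrow> real \<Rightarrow> real" where
  "rlap w r = (if r = 0 then 3 * deriv (deriv w) 0
               else deriv (deriv w) r + 2 / r * deriv w r)"

definition pos_entire_radial_sol :: "real \<Rightarrow> real \<Rightarrow> (real \<Rightarrow> real) \<Rightarrow> bool" where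
  "pos_entire_radial_sol k \<epsilon> u \<longleftrightarrow>
     smooth_fun u \<and> (\<forall>r. u (- r) = u r) \<and> (\<forall>r. u r > 0) \<and>
     (\<forall>r>0. rlap (rlap (rlap u)) r = - 1 / (u r) ^ 3) \<and>
     u 0 = k \<and> rlap u 0 = - \<epsilon> \<and> rlap (rlap u) 0 = 1 \<and>
     deriv u 0 = 0 \<and> deriv (rlap u) 0 = 0 \<and> deriv (rlap (rlap u)) 0 = 0"

definition S_set :: "real \<Rightarrow> real set" where
  "S_set k = {\<epsilon>. \<epsilon> > 0 \<and> (\<exists>u. pos_entire_radial_sol k \<epsilon> u)}"

end

(* Writing v = r u turns the radial Laplacian into v''/r, so the problem says
   (r u)^(6) = - r / u^3 with the Taylor data of r P(r) at the origin, where
   P(r) = k - e r^2/6 + r^4/120 solves Delta^3 P = 0 with the given initial data.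
   Integrating six times, positive radial solutions are exactly the positive even
   continuous fixed points of T_e u = P - I^6[s / u^3] / r, I the primitive from 0.
   T_e is increasing in u and decreasing in e, and P is a supersolution, so as soon
   as a positive subsolution w exists the iterates T_e^n P decrease to a maximal
   positive solution lying above w.  For k >= 100 the function 1 + r^2 is a
   subsolution for e = 1.  Every solution lies below P, which forces 5 e^2 < 6 k, and
   a solution for e' is a subsolution for every e <= e', so S_k is an interval.
   Finally, positive solutions are bounded below on compact sets uniformly in e:
   an upper bound on u' shows that a small value u(r0) would make the forcing s/u^3
   too large near r0.  Hence the decreasing maximal solutions for e_n increasing
   to sup S_k converge to a positive solution for sup S_k. *)

theory Submission
  imports Defs
begin

section \<open>Functions of class \<open>C\<^sup>n\<close> on the real line\<close>

fun cont_diff :: "nat \<Rightarrow> (real \<Rightarrow> real) \<Rightarrow> bool" where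
  "cont_diff 0 f \<longleftrightarrow> continuous_on UNIV f"
| "cont_diff (Suc n) f \<longleftrightarrow> (\<forall>x. f differentiable (at x)) \<and> cont_diff n (deriv f)"

lemma cont_diff_SucI:
  assumes "\<And>x. (f has_real_derivative f' x) (at x)" and "cont_diff n f'"
  shows "cont_diff (Suc n) f"
proof -
  have "deriv f = f'"
    using assms(1) DERIV_imp_deriv by blast
  then show ?thesis
    using assms real_differentiable_def by auto
qed

lemma cont_diff_SucD:
  assumes "cont_diff (Suc n) f"
  shows "(f has_real_derivative deriv f x) (at x)" and "cont_diff n (deriv f)"
  using assms by (auto simp: DERIV_deriv_iff_real_differentiable)

lemma cont_diff_imp_continuous_on: "cont_diff n f \<Longrightarrow> continuous_on UNIV f"
  by (cases n) (auto intro!: differentiable_imp_continuous_on simp: differentiable_on_def)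

lemma cont_diff_Suc_imp: "cont_diff (Suc n) f \<Longrightarrow> cont_diff n f"
proof (induction n arbitrary: f)
  case 0
  then show ?case
    by (auto intro!: differentiable_imp_continuous_on simp: differentiable_on_def)
qed simp

lemma cont_diff_le: "cont_diff n f \<Longrightarrow> m \<le> n \<Longrightarrow> cont_diff m f"
  by (induction n) (use cont_diff_Suc_imp le_Suc_eq in blast)+

lemma cont_diff_const: "cont_diff n (\<lambda>x. c)"
  by (induction n arbitrary: c) (auto intro!: cont_diff_SucI[where f'="\<lambda>x. 0"])

lemma cont_diff_ident: "cont_diff n (\<lambda>x. x)"
  by (cases n) (auto intro!: cont_diff_SucI[where f'="\<lambda>x. 1"] cont_diff_const)

lemma cont_diff_add: "cont_diff n f \<Longrightarrow> cont_diff n g \<Longrightarrow> cont_diff n (\<lambda>x. f x + g x)"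
proof (induction n arbitrary: f g)
  case (Suc n)
  then show ?case
    by (intro cont_diff_SucI[where f'="\<lambda>x. deriv f x + deriv g x"])
       (auto intro!: derivative_eq_intros simp: DERIV_deriv_iff_real_differentiable)
qed (auto intro!: continuous_intros)

lemma cont_diff_minus: "cont_diff n f \<Longrightarrow> cont_diff n (\<lambda>x. - f x)"
proof (induction n arbitrary: f)
  case (Suc n)
  then show ?case
    by (intro cont_diff_SucI[where f'="\<lambda>x. - deriv f x"])
       (auto intro!: derivative_eq_intros simp: DERIV_deriv_iff_real_differentiable)
qed (auto intro!: continuous_intros)

lemma cont_diff_diff: "cont_diff n f \<Longrightarrow> cont_diff n g \<Longrightarrow> cont_diff n (\<lambda>x. f x - g x)"
  using cont_diff_add[of n f "\<lambda>x. - g x"] cont_diff_minus[of n g] by simp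

lemma cont_diff_mult: "cont_diff n f \<Longrightarrow> cont_diff n g \<Longrightarrow> cont_diff n (\<lambda>x. f x * g x)"
proof (induction n arbitrary: f g)
  case (Suc n)
  have "cont_diff n (\<lambda>x. deriv f x * g x + f x * deriv g x)"
    using Suc cont_diff_Suc_imp by (intro cont_diff_add Suc.IH) auto
  moreover have "(f has_real_derivative deriv f x) (at x)" "(g has_real_derivative deriv g x) (at x)"
    for x using Suc.prems cont_diff_SucD by blast+
  ultimately show ?case
    by (intro cont_diff_SucI[where f'="\<lambda>x. deriv f x * g x + f x * deriv g x"])
       (auto intro!: derivative_eq_intros)
qed (auto intro!: continuous_intros)

lemma cont_diff_power: "cont_diff n f \<Longrightarrow> cont_diff n (\<lambda>x. f x ^ m)"
  by (induction m) (auto intro: cont_diff_mult cont_diff_const)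

lemma cont_diff_inverse:
  "cont_diff n f \<Longrightarrow> (\<And>x. f x \<noteq> 0) \<Longrightarrow> cont_diff n (\<lambda>x. 1 / f x)"
proof (induction n arbitrary: f)
  case (Suc n)
  have "cont_diff n (\<lambda>x. 1 / f x)"
    using Suc cont_diff_Suc_imp by blast
  then have "cont_diff n (\<lambda>x. - (deriv f x * (1 / f x) * (1 / f x)))"
    using Suc by (intro cont_diff_minus cont_diff_mult) auto
  then show ?case
    using Suc.prems
    by (intro cont_diff_SucI[where f'="\<lambda>x. - (deriv f x * (1 / f x) * (1 / f x))"])
       (auto intro!: derivative_eq_intros simp: DERIV_deriv_iff_real_differentiable
             simp: power2_eq_square field_simps)
qed (auto intro!: continuous_intros)

lemma cont_diff_funpow_deriv: "cont_diff (n + m) f \<Longrightarrow> cont_diff n ((deriv ^^ m) f)"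
  by (induction m arbitrary: f) (auto simp: funpow_Suc_right simp del: funpow.simps)

lemma smooth_fun_iff_cont_diff: "smooth_fun f \<longleftrightarrow> (\<forall>n. cont_diff n f)"
proof
  assume smooth: "smooth_fun f"
  have "cont_diff n ((deriv ^^ m) f)" for n m
  proof (induction n arbitrary: m)
    case 0
    then show ?case
      using smooth unfolding smooth_fun_def
      by (auto intro!: differentiable_imp_continuous_on simp: differentiable_on_def)
  next
    case (Suc n)
    then show ?case
      using Suc.IH[of "Suc m"] smooth unfolding smooth_fun_def by auto
  qed
  from this[of _ 0] show "\<forall>n. cont_diff n f" by simp
next
  assume "\<forall>n. cont_diff n f"
  then have "cont_diff (Suc 0) ((deriv ^^ m) f)" for m
    using cont_diff_funpow_deriv[of "Suc 0" m f] by simp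
  then show "smooth_fun f"
    unfolding smooth_fun_def by simp
qed

lemma smooth_fun_has_real_derivative:
  "smooth_fun f \<Longrightarrow> (f has_real_derivative deriv f x) (at x)"
  unfolding smooth_fun_def
  by (metis DERIV_deriv_iff_real_differentiable funpow_0)

lemma smooth_fun_deriv: "smooth_fun f \<Longrightarrow> smooth_fun (deriv f)"
  unfolding smooth_fun_def by (metis funpow_Suc_right o_apply)

lemma smooth_fun_mult: "smooth_fun f \<Longrightarrow> smooth_fun g \<Longrightarrow> smooth_fun (\<lambda>x. f x * g x)"
  by (simp add: smooth_fun_iff_cont_diff cont_diff_mult)

lemma smooth_fun_ident: "smooth_fun (\<lambda>x. x)"
  by (simp add: smooth_fun_iff_cont_diff cont_diff_ident)


section \<open>Primitives vanishing at the origin\<close>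

definition prim :: "(real \<Rightarrow> real) \<Rightarrow> real \<Rightarrow> real" where
  "prim h x = (if 0 \<le> x then integral {0..x} h else - integral {x..0} h)"

definition locally_integrable :: "(real \<Rightarrow> real) \<Rightarrow> bool" where
  "locally_integrable h \<longleftrightarrow> (\<forall>a b. h integrable_on {a..b})"

lemma continuous_on_imp_locally_integrable:
  "continuous_on UNIV h \<Longrightarrow> locally_integrable h"
  unfolding locally_integrable_def
  by (meson continuous_on_subset integrable_continuous_real subset_UNIV)

lemma prim_0 [simp]: "prim h 0 = 0"
  by (simp add: prim_def)

lemma funpow_prim_at_0: "0 < n \<Longrightarrow> (prim ^^ n) h 0 = 0"
  by (cases n) simp_all

lemma prim_zero: "prim (\<lambda>_. 0) = (\<lambda>_. 0)"
  by (simp add: prim_def fun_eq_iff)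

lemma prim_eq_integral_diff:
  assumes "locally_integrable h" "a \<le> 0" "a \<le> x"
  shows "prim h x = integral {a..x} h - integral {a..0} h"
proof (cases "0 \<le> x")
  case True
  have "integral {a..0} h + integral {0..x} h = integral {a..x} h"
    using assms True unfolding locally_integrable_def by (intro Henstock_Kurzweil_Integration.integral_combine) auto
  then show ?thesis
    using True by (simp add: prim_def)
next
  case False
  have "integral {a..x} h + integral {x..0} h = integral {a..0} h"
    using assms False unfolding locally_integrable_def by (intro Henstock_Kurzweil_Integration.integral_combine) auto
  then show ?thesis
    using False by (simp add: prim_def)
qed

lemma isCont_prim:
  assumes "locally_integrable h"
  shows "isCont (prim h) x"
proof -
  define a where "a = - \<bar>x\<bar> - 1"
  define b where "b = \<bar>x\<bar> + 1"
  have "continuous_on {a..b} (\<lambda>y. integral {a..y} h - integral {a..0} h)"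
    using assms unfolding locally_integrable_def
    by (intro continuous_intros indefinite_integral_continuous_1) auto
  then have "continuous_on {a..b} (prim h)"
    by (rule continuous_on_eq) (use assms prim_eq_integral_diff[of h a] in \<open>auto simp: a_def\<close>)
  moreover have "x \<in> interior {a..b}"
    by (auto simp: a_def b_def)
  ultimately show ?thesis
    using continuous_on_interior by blast
qed

lemma continuous_on_prim: "locally_integrable h \<Longrightarrow> continuous_on UNIV (prim h)"
  by (simp add: isCont_prim continuous_at_imp_continuous_on)

lemma has_real_derivative_prim:
  assumes "continuous_on UNIV h"
  shows "(prim h has_real_derivative h x) (at x)"
proof -
  define a where "a = - \<bar>x\<bar> - 1"
  define b where "b = \<bar>x\<bar> + 1"
  have "((\<lambda>y. integral {a..y} h) has_real_derivative h x) (at x within {a..b})"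
    using assms
    by (intro integral_has_real_derivative) (auto simp: a_def b_def intro: continuous_on_subset)
  moreover have "x \<in> interior {a..b}"
    by (auto simp: a_def b_def)
  ultimately have "((\<lambda>y. integral {a..y} h) has_real_derivative h x) (at x)"
    using at_within_interior by metis
  then have "((\<lambda>y. integral {a..y} h - integral {a..0} h) has_real_derivative h x) (at x)"
    by (auto intro!: derivative_eq_intros)
  then show ?thesis
    by (rule has_field_derivative_transform_within_open[where S="{a<..}"])
       (use assms continuous_on_imp_locally_integrable prim_eq_integral_diff[of h a]
         in \<open>auto simp: a_def\<close>)
qed

lemma prim_eq_diff:
  assumes "\<And>x. (F has_real_derivative f x) (at x)"
  shows "prim f x = F x - F 0"
proof -
  have "(f has_integral (F b - F a)) {a..b}" if "a \<le> b" for a b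
    using that assms
    by (intro fundamental_theorem_of_calculus)
       (auto simp: has_real_derivative_iff_has_vector_derivative[symmetric]
             intro: has_field_derivative_at_within)
  from this[of 0 x] this[of x 0] show ?thesis
    by (cases "0 \<le> x") (auto simp: prim_def integral_unique)
qed

lemma prim_mono:
  assumes "locally_integrable h1" "locally_integrable h2" "0 \<le> x"
    and "\<And>s. 0 \<le> s \<Longrightarrow> s \<le> x \<Longrightarrow> h1 s \<le> h2 s"
  shows "prim h1 x \<le> prim h2 x"
  using assms unfolding prim_def locally_integrable_def by (auto intro!: integral_le)

lemma prim_even:
  assumes "\<And>s. h (- s) = - h s"
  shows "prim h (- x) = prim h x"
proof -
  have sym: "(\<lambda>s. h (- s)) = (\<lambda>s. - h s)"
    using assms by auto
  have reflect: "integral {-y..0} h = - integral {0..y} h" for y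
  proof -
    have "integral {-y..-0} (\<lambda>s. h (- s)) = integral {0..y} h"
      by (rule Henstock_Kurzweil_Integration.integral_reflect_real)
    then show ?thesis
      unfolding sym by (simp add: integral_neg)
  qed
  show ?thesis
  proof (cases "0 \<le> x")
    case True
    then show ?thesis
      using reflect[of x] by (simp add: prim_def)
  next
    case False
    then show ?thesis
      using reflect[of "- x"] by (simp add: prim_def)
  qed
qed

lemma prim_odd:
  assumes "\<And>s. h (- s) = h s"
  shows "prim h (- x) = - prim h x"
proof -
  have sym: "(\<lambda>s. h (- s)) = h"
    using assms by auto
  have reflect: "integral {-y..0} h = integral {0..y} h" for y
  proof -
    have "integral {-y..-0} (\<lambda>s. h (- s)) = integral {0..y} h"
      by (rule Henstock_Kurzweil_Integration.integral_reflect_real)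
    then show ?thesis
      unfolding sym by simp
  qed
  show ?thesis
  proof (cases "0 \<le> x")
    case True
    then show ?thesis
      using reflect[of x] by (simp add: prim_def)
  next
    case False
    then show ?thesis
      using reflect[of "- x"] by (simp add: prim_def)
  qed
qed

lemma abs_prim_le:
  assumes "continuous_on UNIV h" "\<And>s. \<bar>s\<bar> \<le> \<bar>x\<bar> \<Longrightarrow> \<bar>h s\<bar> \<le> C"
  shows "\<bar>prim h x\<bar> \<le> C * \<bar>x\<bar>"
proof (cases "0 \<le> x")
  case True
  have "norm (integral {0..x} h) \<le> C * (x - 0)"
    by (rule integral_bound) (use True assms in \<open>auto intro: continuous_on_subset\<close>)
  then show ?thesis
    using True by (simp add: prim_def)
next
  case False
  have "norm (integral {x..0} h) \<le> C * (0 - x)"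
    by (rule integral_bound) (use False assms in \<open>auto intro: continuous_on_subset\<close>)
  then show ?thesis
    using False by (simp add: prim_def)
qed

lemma locally_integrable_prim: "locally_integrable h \<Longrightarrow> locally_integrable (prim h)"
  by (simp add: continuous_on_prim continuous_on_imp_locally_integrable)

lemma locally_integrable_funpow_prim:
  "locally_integrable h \<Longrightarrow> locally_integrable ((prim ^^ n) h)"
  by (induction n) (auto intro: locally_integrable_prim)

lemma continuous_on_funpow_prim:
  "locally_integrable h \<Longrightarrow> continuous_on UNIV ((prim ^^ Suc n) h)"
  by (simp add: continuous_on_prim locally_integrable_funpow_prim)

lemma has_real_derivative_funpow_prim:
  assumes "continuous_on UNIV h"
  shows "((prim ^^ Suc j) h has_real_derivative (prim ^^ j) h x) (at x)"
proof -
  have "continuous_on UNIV ((prim ^^ j) h)"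
  proof (cases j)
    case (Suc i)
    then show ?thesis
      using continuous_on_funpow_prim[OF continuous_on_imp_locally_integrable[OF assms], of i]
      by simp
  qed (use assms in simp)
  then show ?thesis
    by (simp add: has_real_derivative_prim)
qed

lemma cont_diff_prim: "cont_diff n h \<Longrightarrow> cont_diff (Suc n) (prim h)"
  by (rule cont_diff_SucI[where f'=h]) (auto intro: has_real_derivative_prim cont_diff_imp_continuous_on)

lemma cont_diff_funpow_prim: "locally_integrable h \<Longrightarrow> cont_diff n ((prim ^^ Suc n) h)"
proof (induction n)
  case 0
  then show ?case
    using continuous_on_prim by simp
next
  case (Suc n)
  then have "cont_diff (Suc n) (prim ((prim ^^ Suc n) h))"
    by (intro cont_diff_prim) blast
  then show ?case
    by (metis comp_apply funpow.simps(2))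
qed

lemma cont_diff_funpow_prim_add: "cont_diff n h \<Longrightarrow> cont_diff (n + j) ((prim ^^ j) h)"
proof (induction j)
  case (Suc j)
  then have "cont_diff (Suc (n + j)) (prim ((prim ^^ j) h))"
    by (intro cont_diff_prim)
  then show ?case
    by simp
qed simp

lemma funpow_prim_mono:
  assumes "locally_integrable h1" "locally_integrable h2" "0 \<le> x"
    and "\<And>s. 0 \<le> s \<Longrightarrow> h1 s \<le> h2 s"
  shows "(prim ^^ n) h1 x \<le> (prim ^^ n) h2 x"
  using assms(3)
proof (induction n arbitrary: x)
  case (Suc n)
  have "prim ((prim ^^ n) h1) x \<le> prim ((prim ^^ n) h2) x"
    by (rule prim_mono) (use Suc assms locally_integrable_funpow_prim in auto)
  then show ?case
    by simp
qed (use assms in simp)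

lemma funpow_prim_nonneg:
  assumes "locally_integrable h" "\<And>s. 0 \<le> s \<Longrightarrow> 0 \<le> h s" "0 \<le> x"
  shows "0 \<le> (prim ^^ n) h x"
proof -
  have "(prim ^^ n) (\<lambda>_. 0) x \<le> (prim ^^ n) h x"
    by (rule funpow_prim_mono) (use assms continuous_on_imp_locally_integrable in auto)
  moreover have "(prim ^^ n) (\<lambda>_. 0) = (\<lambda>_. 0)"
    by (induction n) (simp_all add: prim_zero)
  ultimately show ?thesis
    by simp
qed

lemma funpow_prim_odd:
  assumes "\<And>s. h (- s) = - h s"
  shows "(prim ^^ (2 * j)) h (- x) = - (prim ^^ (2 * j)) h x"
proof (induction j arbitrary: x)
  case (Suc j)
  have "prim ((prim ^^ (2 * j)) h) (- y) = prim ((prim ^^ (2 * j)) h) y" for y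
    using Suc by (intro prim_even) auto
  then have "prim (prim ((prim ^^ (2 * j)) h)) (- x) = - prim (prim ((prim ^^ (2 * j)) h)) x"
    by (intro prim_odd)
  moreover have "(prim ^^ (2 * Suc j)) h = prim (prim ((prim ^^ (2 * j)) h))"
    by (simp add: mult_2)
  ultimately show ?case
    by simp
qed (use assms in simp)

section \<open>Division by the variable\<close>

definition hadamard_integral :: "nat \<Rightarrow> (real \<Rightarrow> real) \<Rightarrow> real \<Rightarrow> real" where
  "hadamard_integral j g r = integral {0..1} (\<lambda>t. t ^ j * g (r * t))"

definition div_x :: "(real \<Rightarrow> real) \<Rightarrow> real \<Rightarrow> real" where
  "div_x f x = (if x = 0 then deriv f 0 else f x / x)"

lemma continuous_on_hadamard_integrand:
  fixes g :: "real \<Rightarrow> real"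
  assumes "continuous_on UNIV g"
  shows "continuous_on (UNIV \<times> cbox 0 1) (\<lambda>(x, t). t ^ j * g (x * t))"
proof -
  have "continuous_on (UNIV \<times> cbox 0 1) (\<lambda>p. g (fst p * snd p))"
    by (rule continuous_on_compose2[OF assms]) (auto intro!: continuous_intros)
  then show ?thesis
    by (auto simp: split_beta intro!: continuous_intros)
qed

lemma continuous_on_hadamard_integral:
  assumes "continuous_on UNIV g"
  shows "continuous_on UNIV (hadamard_integral j g)"
proof -
  have "continuous_on UNIV (\<lambda>x. integral (cbox 0 1) (\<lambda>t. t ^ j * g (x * t)))"
    using integral_continuous_on_param[OF continuous_on_hadamard_integrand[OF assms, of j]]
    by simp
  then show ?thesis
    by (simp add: hadamard_integral_def)
qed

lemma has_real_derivative_hadamard_integral: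
  assumes g': "\<And>x. (g has_real_derivative g' x) (at x)" and "continuous_on UNIV g'"
  shows "(hadamard_integral j g has_real_derivative hadamard_integral (Suc j) g' x) (at x)"
proof -
  have "continuous_on UNIV g"
    using g' by (meson DERIV_continuous continuous_at_imp_continuous_on)
  have "((\<lambda>x. integral (cbox 0 1) (\<lambda>t. t ^ j * g (x * t))) has_field_derivative
           integral (cbox 0 1) (\<lambda>t. t ^ Suc j * g' (x * t))) (at x within UNIV)"
  proof (rule leibniz_rule_field_derivative)
    fix x t :: real
    have "((\<lambda>x. g (x * t)) has_real_derivative g' (x * t) * t) (at x)"
      by (rule DERIV_chain2[OF g']) (auto intro!: derivative_eq_intros)
    then show "((\<lambda>x. t ^ j * g (x * t)) has_field_derivative t ^ Suc j * g' (x * t))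
        (at x within UNIV)"
      by (auto intro!: derivative_eq_intros simp: algebra_simps)
  next
    show "(\<lambda>t. t ^ j * g (x * t)) integrable_on cbox 0 1" for x
      by (intro integrable_continuous)
         (auto intro!: continuous_intros continuous_on_compose2[OF \<open>continuous_on UNIV g\<close>])
  next
    show "continuous_on (UNIV \<times> cbox 0 1) (\<lambda>(x, t). t ^ Suc j * g' (x * t))"
      using assms(2) by (rule continuous_on_hadamard_integrand)
  qed auto
  then show ?thesis
    unfolding hadamard_integral_def by simp
qed

lemma cont_diff_hadamard_integral: "cont_diff n g \<Longrightarrow> cont_diff n (hadamard_integral j g)"
proof (induction n arbitrary: g j)
  case 0
  then show ?case
    using continuous_on_hadamard_integral by simp
next
  case (Suc n)
  then show ?case
    using cont_diff_SucD[OF Suc.prems]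
    by (intro cont_diff_SucI[OF has_real_derivative_hadamard_integral] Suc.IH)
       (auto intro: cont_diff_imp_continuous_on)
qed

lemma div_x_eq_hadamard_integral:
  assumes f': "\<And>x. (f has_real_derivative f' x) (at x)" and "f 0 = 0"
  shows "div_x f = hadamard_integral 0 f'"
proof
  fix x :: real
  show "div_x f x = hadamard_integral 0 f' x"
  proof (cases "x = 0")
    case True
    then show ?thesis
      using DERIV_imp_deriv[OF f'[of 0]] by (simp add: div_x_def hadamard_integral_def)
  next
    case False
    have "((\<lambda>t. f' (x * t)) has_integral (f (x * 1) / x - f (x * 0) / x)) {0..1}"
    proof (rule fundamental_theorem_of_calculus)
      fix t :: real
      have "((\<lambda>t. f (x * t)) has_real_derivative f' (x * t) * x) (at t)"
        by (rule DERIV_chain2[OF f']) (auto intro!: derivative_eq_intros)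
      then have "((\<lambda>t. f (x * t) / x) has_real_derivative f' (x * t)) (at t)"
        using False by (auto intro!: derivative_eq_intros)
      then show "((\<lambda>t. f (x * t) / x) has_vector_derivative f' (x * t)) (at t within {0..1})"
        by (simp add: has_real_derivative_iff_has_vector_derivative[symmetric]
            has_field_derivative_at_within)
    qed simp
    then show ?thesis
      using False assms by (simp add: div_x_def hadamard_integral_def integral_unique)
  qed
qed

lemma cont_diff_div_x:
  assumes "cont_diff (Suc n) f" "f 0 = 0"
  shows "cont_diff n (div_x f)"
proof -
  have "div_x f = hadamard_integral 0 (deriv f)"
    using cont_diff_SucD(1)[OF assms(1)] assms(2) by (rule div_x_eq_hadamard_integral)
  then show ?thesis
    using cont_diff_SucD(2)[OF assms(1)] by (simp add: cont_diff_hadamard_integral)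
qed

lemma smooth_fun_div_x: "smooth_fun f \<Longrightarrow> f 0 = 0 \<Longrightarrow> smooth_fun (div_x f)"
  by (simp add: smooth_fun_iff_cont_diff cont_diff_div_x)

section \<open>The radial Laplacian of an even smooth profile\<close>

lemma DERIV_even_imp_odd:
  assumes f': "\<And>x. (f has_real_derivative f' x) (at x)" and "\<And>x. f (- x) = f x"
  shows "f' (- x) = - f' x"
proof -
  have "((\<lambda>x. f (- x)) has_real_derivative f' (- x) * (- 1)) (at x)"
    by (rule DERIV_chain2[OF f']) (auto intro!: derivative_eq_intros)
  moreover have "(\<lambda>x. f (- x)) = f"
    using assms(2) by auto
  ultimately have "(f has_real_derivative - f' (- x)) (at x)"
    by simp
  from DERIV_unique[OF f'[of x] this] show ?thesis
    by simp
qed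

lemma DERIV_odd_imp_even:
  assumes f': "\<And>x. (f has_real_derivative f' x) (at x)" and "\<And>x. f (- x) = - f x"
  shows "f' (- x) = f' x"
proof -
  have "((\<lambda>x. f (- x)) has_real_derivative f' (- x) * (- 1)) (at x)"
    by (rule DERIV_chain2[OF f']) (auto intro!: derivative_eq_intros)
  moreover have "(\<lambda>x. f (- x)) = (\<lambda>x. - f x)"
    using assms(2) by auto
  ultimately have "((\<lambda>x. - f x) has_real_derivative - f' (- x)) (at x)"
    by simp
  then have "((\<lambda>x. - (- f x)) has_real_derivative - (- f' (- x))) (at x)"
    by (rule DERIV_minus)
  then have "(f has_real_derivative f' (- x)) (at x)"
    by simp
  from DERIV_unique[OF f'[of x] this] show ?thesis
    by simp
qed

locale even_smooth =
  fixes v :: "real \<Rightarrow> real"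
  assumes smooth: "smooth_fun v" and even: "\<And>r. v (- r) = v r"
begin

lemma deriv_odd: "deriv v (- r) = - deriv v r"
  using DERIV_even_imp_odd[OF smooth_fun_has_real_derivative[OF smooth] even] .

lemma deriv_0: "deriv v 0 = 0"
  using deriv_odd[of 0] by simp

lemma deriv2_even: "deriv (deriv v) (- r) = deriv (deriv v) r"
  using DERIV_odd_imp_even[OF smooth_fun_has_real_derivative[OF smooth_fun_deriv[OF smooth]]
      deriv_odd] .

lemma times_rlap: "(\<lambda>r. r * rlap v r) = (\<lambda>r. 2 * deriv v r + r * deriv (deriv v) r)"
  by (rule ext) (auto simp: rlap_def field_simps deriv_0)

lemma deriv2_times_ident: "deriv (deriv (\<lambda>r. r * v r)) = (\<lambda>r. r * rlap v r)"
proof -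
  note v' = smooth_fun_has_real_derivative[OF smooth]
  note v'' = smooth_fun_has_real_derivative[OF smooth_fun_deriv[OF smooth]]
  have "deriv (\<lambda>r. r * v r) = (\<lambda>r. v r + r * deriv v r)"
    by (rule ext, rule DERIV_imp_deriv) (auto intro!: derivative_eq_intros v')
  moreover have "deriv (\<lambda>r. v r + r * deriv v r) = (\<lambda>r. 2 * deriv v r + r * deriv (deriv v) r)"
    by (rule ext, rule DERIV_imp_deriv) (auto intro!: derivative_eq_intros v' v'')
  ultimately show ?thesis
    by (simp add: times_rlap)
qed

lemma smooth_fun_times_rlap: "smooth_fun (\<lambda>r. r * rlap v r)"
  unfolding deriv2_times_ident[symmetric]
  by (intro smooth_fun_deriv smooth_fun_mult smooth_fun_ident smooth)

lemma rlap_eq_div_x: "rlap v = div_x (\<lambda>r. r * rlap v r)"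
proof -
  note v' = smooth_fun_has_real_derivative[OF smooth_fun_deriv[OF smooth]]
  note v'' = smooth_fun_has_real_derivative[OF smooth_fun_deriv[OF smooth_fun_deriv[OF smooth]]]
  have "((\<lambda>r. 2 * deriv v r + r * deriv (deriv v) r) has_real_derivative
      2 * deriv (deriv v) 0 + (deriv (deriv v) 0 + 0 * deriv (deriv (deriv v)) 0)) (at 0)"
    by (auto intro!: derivative_eq_intros v' v'')
  then have "deriv (\<lambda>r. r * rlap v r) 0 = rlap v 0"
    unfolding times_rlap by (auto simp: rlap_def dest: DERIV_imp_deriv)
  then show ?thesis
    by (auto simp: div_x_def fun_eq_iff)
qed

lemma deriv_times_ident_at_0: "deriv (\<lambda>r. r * v r) 0 = v 0"
  by (rule DERIV_imp_deriv)
     (auto intro!: derivative_eq_intros smooth_fun_has_real_derivative[OF smooth])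

lemma even_smooth_rlap: "even_smooth (rlap v)"
proof
  have "smooth_fun (div_x (\<lambda>r. r * rlap v r))"
    by (rule smooth_fun_div_x[OF smooth_fun_times_rlap]) simp
  then show "smooth_fun (rlap v)"
    using rlap_eq_div_x by metis
  show "rlap v (- r) = rlap v r" for r
    using deriv_odd[of r] deriv2_even[of r] by (simp add: rlap_def)
qed

lemma even_smooth_funpow_rlap: "even_smooth ((rlap ^^ i) v)"
  by (induction i) (simp_all add: even_smooth_axioms even_smooth.even_smooth_rlap)

end

text \<open>For even smooth \<open>u\<close>, \<open>radial_deriv u j\<close> is the \<open>j\<close>-th derivative of \<open>r * u r\<close>,
  since \<open>(r * w r)'' = r * rlap w r\<close>.\<close>

definition radial_deriv :: "(real \<Rightarrow> real) \<Rightarrow> nat \<Rightarrow> real \<Rightarrow> real" where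
  "radial_deriv u j =
     (if even j then (\<lambda>r. r * (rlap ^^ (j div 2)) u r) else deriv (\<lambda>r. r * (rlap ^^ (j div 2)) u r))"

lemma radial_deriv_6: "radial_deriv u 6 = (\<lambda>r. r * rlap (rlap (rlap u)) r)"
  by (simp add: radial_deriv_def numeral_3_eq_3)

context even_smooth
begin

lemma has_real_derivative_radial_deriv:
  "(radial_deriv v j has_real_derivative radial_deriv v (Suc j) x) (at x)"
proof -
  interpret w: even_smooth "(rlap ^^ (j div 2)) v"
    by (rule even_smooth_funpow_rlap)
  have smooth_times: "smooth_fun (\<lambda>r. r * (rlap ^^ (j div 2)) v r)"
    by (intro smooth_fun_mult smooth_fun_ident w.smooth)
  show ?thesis
  proof (cases "even j")
    case True
    then show ?thesis
      using smooth_fun_has_real_derivative[OF smooth_times] by (simp add: radial_deriv_def)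
  next
    case False
    then have "radial_deriv v (Suc j) = deriv (radial_deriv v j)"
      by (simp add: radial_deriv_def w.deriv2_times_ident odd_Suc_div_two)
    then show ?thesis
      using False smooth_fun_has_real_derivative[OF smooth_fun_deriv[OF smooth_times]]
      by (simp add: radial_deriv_def)
  qed
qed

lemma radial_deriv_at_0:
  "radial_deriv v j 0 = (if even j then 0 else (rlap ^^ (j div 2)) v 0)"
proof -
  interpret w: even_smooth "(rlap ^^ (j div 2)) v"
    by (rule even_smooth_funpow_rlap)
  show ?thesis
    by (simp add: radial_deriv_def w.deriv_times_ident_at_0)
qed

lemma radial_deriv_at_0_numeral:
  "radial_deriv v 0 0 = 0" "radial_deriv v 1 0 = v 0" "radial_deriv v 2 0 = 0"
  "radial_deriv v 3 0 = rlap v 0" "radial_deriv v 4 0 = 0" "radial_deriv v 5 0 = rlap (rlap v) 0"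
proof -
  have "(rlap ^^ 1) v = rlap v" "(rlap ^^ 2) v = rlap (rlap v)"
    by (simp_all add: numeral_2_eq_2)
  then show "radial_deriv v 0 0 = 0" "radial_deriv v 1 0 = v 0" "radial_deriv v 2 0 = 0"
    "radial_deriv v 3 0 = rlap v 0" "radial_deriv v 4 0 = 0" "radial_deriv v 5 0 = rlap (rlap v) 0"
    by (simp_all add: radial_deriv_at_0)
qed

end

section \<open>The equivalent integral equation\<close>

definition free_sol :: "real \<Rightarrow> real \<Rightarrow> real \<Rightarrow> real" where
  "free_sol k e r = k - e * r ^ 2 / 6 + r ^ 4 / 120"

definition forcing :: "(real \<Rightarrow> real) \<Rightarrow> real \<Rightarrow> real" where
  "forcing u s = s / u s ^ 3"

definition sol_map :: "real \<Rightarrow> real \<Rightarrow> (real \<Rightarrow> real) \<Rightarrow> real \<Rightarrow> real" where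
  "sol_map k e u r = (if r = 0 then k else free_sol k e r - (prim ^^ 6) (forcing u) r / r)"

text \<open>\<open>free_deriv k e j\<close> and \<open>sol_deriv k e u j\<close> are the \<open>j\<close>-th derivatives of
  \<open>r * free_sol k e r\<close> and of \<open>r * sol_map k e u r\<close>.\<close>

fun free_deriv :: "real \<Rightarrow> real \<Rightarrow> nat \<Rightarrow> real \<Rightarrow> real" where
  "free_deriv k e 0 r = k * r - e * r ^ 3 / 6 + r ^ 5 / 120"
| "free_deriv k e (Suc 0) r = k - e * r ^ 2 / 2 + r ^ 4 / 24"
| "free_deriv k e (Suc (Suc 0)) r = - e * r + r ^ 3 / 6"
| "free_deriv k e (Suc (Suc (Suc 0))) r = - e + r ^ 2 / 2"
| "free_deriv k e (Suc (Suc (Suc (Suc 0)))) r = r"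
| "free_deriv k e (Suc (Suc (Suc (Suc (Suc 0))))) r = 1"
| "free_deriv k e (Suc (Suc (Suc (Suc (Suc (Suc _)))))) r = 0"

definition sol_deriv :: "real \<Rightarrow> real \<Rightarrow> (real \<Rightarrow> real) \<Rightarrow> nat \<Rightarrow> real \<Rightarrow> real" where
  "sol_deriv k e u j r = free_deriv k e j r - (prim ^^ (6 - j)) (forcing u) r"

definition int_sol :: "real \<Rightarrow> real \<Rightarrow> (real \<Rightarrow> real) \<Rightarrow> bool" where
  "int_sol k e u \<longleftrightarrow>
     (\<forall>r. u (- r) = u r) \<and> (\<forall>r. 0 < u r) \<and> continuous_on UNIV u \<and> (\<forall>r. u r = sol_map k e u r)"

lemma free_deriv_numeral:
  "free_deriv k e 0 = (\<lambda>r. k * r - e * r ^ 3 / 6 + r ^ 5 / 120)"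
  "free_deriv k e 1 = (\<lambda>r. k - e * r ^ 2 / 2 + r ^ 4 / 24)"
  "free_deriv k e 2 = (\<lambda>r. - e * r + r ^ 3 / 6)"
  "free_deriv k e 3 = (\<lambda>r. - e + r ^ 2 / 2)"
  "free_deriv k e 4 = (\<lambda>r. r)"
  "free_deriv k e 5 = (\<lambda>r. 1)"
  "free_deriv k e 6 = (\<lambda>r. 0)"
  by (simp_all add: fun_eq_iff numeral_eq_Suc)

lemma free_deriv_at_0:
  "free_deriv k e 0 0 = 0" "free_deriv k e 1 0 = k" "free_deriv k e 2 0 = 0"
  "free_deriv k e 3 0 = - e" "free_deriv k e 4 0 = 0" "free_deriv k e 5 0 = 1"
  by (simp_all add: free_deriv_numeral)

lemma has_real_derivative_free_deriv:
  assumes "j < 6"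
  shows "(free_deriv k e j has_real_derivative free_deriv k e (Suc j) x) (at x)"
proof -
  have "j = 0 \<or> j = 1 \<or> j = 2 \<or> j = 3 \<or> j = 4 \<or> j = 5"
    using assms by auto
  moreover have "(free_deriv k e 0 has_real_derivative free_deriv k e 1 x) (at x)"
    and "(free_deriv k e 1 has_real_derivative free_deriv k e 2 x) (at x)"
    and "(free_deriv k e 2 has_real_derivative free_deriv k e 3 x) (at x)"
    and "(free_deriv k e 3 has_real_derivative free_deriv k e 4 x) (at x)"
    and "(free_deriv k e 4 has_real_derivative free_deriv k e 5 x) (at x)"
    and "(free_deriv k e 5 has_real_derivative free_deriv k e 6 x) (at x)"
    unfolding free_deriv_numeral by (auto intro!: derivative_eq_intros simp: field_simps)
  ultimately show ?thesis
    by (elim disjE) (simp_all add: numeral_eq_Suc)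
qed

lemma free_deriv_0_eq: "free_deriv k e 0 r = r * free_sol k e r"
  by (simp add: free_sol_def field_simps power_def)

lemma cont_diff_free_deriv_0: "cont_diff n (free_deriv k e 0)"
proof -
  have "cont_diff n (\<lambda>r. k * r - (e / 6) * r ^ 3 + (1 / 120) * r ^ 5)"
    by (intro cont_diff_add cont_diff_diff cont_diff_mult cont_diff_const cont_diff_power
        cont_diff_ident)
  then show ?thesis
    by (simp add: free_deriv_numeral)
qed

lemma int_solD:
  assumes "int_sol k e u"
  shows "u (- r) = u r" "0 < u r" "continuous_on UNIV u" "sol_map k e u r = u r"
  using assms unfolding int_sol_def by metis+

lemma sol_map_at_0 [simp]: "sol_map k e u 0 = k"
  by (simp add: sol_map_def)

lemma continuous_on_forcing:
  "continuous_on UNIV u \<Longrightarrow> (\<And>s. 0 < u s) \<Longrightarrow> continuous_on UNIV (forcing u)"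
  unfolding forcing_def by (intro continuous_intros) (auto simp: less_imp_neq[symmetric])

lemma locally_integrable_forcing:
  "continuous_on UNIV u \<Longrightarrow> (\<And>s. 0 < u s) \<Longrightarrow> locally_integrable (forcing u)"
  by (simp add: continuous_on_forcing continuous_on_imp_locally_integrable)

lemma cont_diff_forcing:
  assumes "cont_diff m u" "\<And>s. 0 < u s"
  shows "cont_diff m (forcing u)"
proof -
  have "u s ^ 3 \<noteq> 0" for s
    using assms(2)[of s] by simp
  then have "cont_diff m (\<lambda>s. s * (1 / u s ^ 3))"
    using assms(1) by (intro cont_diff_mult cont_diff_ident cont_diff_inverse cont_diff_power)
  then show ?thesis
    by (simp add: forcing_def[abs_def])
qed

lemma continuous_on_free_sol: "continuous_on UNIV (free_sol k e)"
  unfolding free_sol_def by (intro continuous_intros) auto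

lemma forcing_odd: "(\<And>r. u (- r) = u r) \<Longrightarrow> forcing u (- s) = - forcing u s"
  by (simp add: forcing_def)

lemma forcing_nonneg: "0 < u s \<Longrightarrow> 0 \<le> s \<Longrightarrow> 0 \<le> forcing u s"
  by (simp add: forcing_def)

lemma forcing_antimono:
  assumes "0 < u s" "u s \<le> v s" "0 \<le> s"
  shows "forcing v s \<le> forcing u s"
proof -
  have "u s ^ 3 \<le> v s ^ 3"
    using assms by (intro power_mono) auto
  then show ?thesis
    using assms unfolding forcing_def by (intro divide_left_mono) auto
qed

lemma has_real_derivative_sol_deriv:
  assumes "continuous_on UNIV (forcing u)" "j < 6"
  shows "(sol_deriv k e u j has_real_derivative sol_deriv k e u (Suc j) x) (at x)"
proof -
  have "6 - j = Suc (5 - j)" "6 - Suc j = 5 - j"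
    using assms(2) by auto
  then show ?thesis
    unfolding sol_deriv_def
    by (simp only:) (intro derivative_intros has_real_derivative_free_deriv
        has_real_derivative_funpow_prim assms)
qed

lemma has_real_derivative_sol_deriv_0:
  assumes "locally_integrable (forcing u)"
  shows "(sol_deriv k e u 0 has_real_derivative sol_deriv k e u 1 x) (at x)"
proof -
  have "continuous_on UNIV ((prim ^^ 5) (forcing u))"
    using continuous_on_funpow_prim[OF assms, of 4] by (simp add: numeral_eq_Suc)
  then have "((prim ^^ 6) (forcing u) has_real_derivative (prim ^^ 5) (forcing u) x) (at x)"
    using has_real_derivative_prim by (simp add: numeral_eq_Suc)
  from DERIV_diff[OF has_real_derivative_free_deriv[of 0 k e x] this]
  show ?thesis
    by (simp add: sol_deriv_def[abs_def])
qed

lemma sol_deriv_6: "sol_deriv k e u 6 = (\<lambda>r. - forcing u r)"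
  by (simp add: sol_deriv_def free_deriv_numeral fun_eq_iff)

lemma sol_deriv_at_0: "j < 6 \<Longrightarrow> sol_deriv k e u j 0 = free_deriv k e j 0"
  by (simp add: sol_deriv_def funpow_prim_at_0)

lemma times_sol_map: "r * sol_map k e u r = sol_deriv k e u 0 r"
  by (cases "r = 0") (simp_all add: sol_map_def sol_deriv_def free_deriv_0_eq funpow_prim_at_0
      right_diff_distrib del: free_deriv.simps)

lemma sol_map_eq_div_x:
  assumes "locally_integrable (forcing u)"
  shows "sol_map k e u = div_x (sol_deriv k e u 0)"
proof
  fix r :: real
  have "deriv (sol_deriv k e u 0) 0 = k"
    using DERIV_imp_deriv[OF has_real_derivative_sol_deriv_0[OF assms]] sol_deriv_at_0[of 1]
    by (simp add: free_deriv_at_0)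
  then show "sol_map k e u r = div_x (sol_deriv k e u 0) r"
    using times_sol_map[of r k e u, symmetric]
    by (cases "r = 0") (auto simp: div_x_def sol_map_def)
qed

lemma continuous_on_sol_map:
  assumes "locally_integrable (forcing u)"
  shows "continuous_on UNIV (sol_map k e u)"
proof -
  have "cont_diff 1 ((prim ^^ 6) (forcing u))"
    using cont_diff_funpow_prim[OF assms, of 5] cont_diff_le[of 5 _ 1] by (simp add: numeral_eq_Suc)
  then have "cont_diff 1 (sol_deriv k e u 0)"
    unfolding sol_deriv_def by (intro cont_diff_diff cont_diff_free_deriv_0) simp
  then have "cont_diff 0 (div_x (sol_deriv k e u 0))"
    by (intro cont_diff_div_x) (simp_all add: sol_deriv_at_0 free_deriv_at_0)
  then show ?thesis
    using sol_map_eq_div_x[OF assms] by simp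
qed

lemma cont_diff_sol_map:
  assumes "cont_diff m (forcing u)"
  shows "cont_diff (m + 5) (sol_map k e u)"
proof -
  have "cont_diff (Suc (m + 5)) ((prim ^^ 6) (forcing u))"
    using cont_diff_funpow_prim_add[OF assms, of 6] by (simp add: add.commute)
  then have "cont_diff (Suc (m + 5)) (sol_deriv k e u 0)"
    unfolding sol_deriv_def by (intro cont_diff_diff cont_diff_free_deriv_0) simp
  then have "cont_diff (m + 5) (div_x (sol_deriv k e u 0))"
    by (intro cont_diff_div_x) (simp_all add: sol_deriv_at_0 free_deriv_at_0)
  moreover have "locally_integrable (forcing u)"
    using assms cont_diff_imp_continuous_on continuous_on_imp_locally_integrable by blast
  ultimately show ?thesis
    using sol_map_eq_div_x by simp
qed

lemma sol_map_even:
  assumes "\<And>r. u (- r) = u r"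
  shows "sol_map k e u (- r) = sol_map k e u r"
proof -
  have "(prim ^^ (2 * 3)) (forcing u) (- r) = - (prim ^^ (2 * 3)) (forcing u) r"
    by (rule funpow_prim_odd) (use assms forcing_odd in auto)
  then show ?thesis
    by (simp add: sol_map_def free_sol_def)
qed

lemma sol_map_le_free_sol:
  assumes "locally_integrable (forcing u)" "\<And>s. 0 \<le> s \<Longrightarrow> 0 < u s" "0 \<le> r"
  shows "sol_map k e u r \<le> free_sol k e r"
proof -
  have "0 \<le> (prim ^^ 6) (forcing u) r"
    using assms by (intro funpow_prim_nonneg forcing_nonneg) auto
  then show ?thesis
    using assms(3) by (simp add: sol_map_def free_sol_def)
qed

lemma sol_map_mono:
  assumes "locally_integrable (forcing u)" "locally_integrable (forcing v)"
    and "\<And>s. 0 \<le> s \<Longrightarrow> 0 < u s" "\<And>s. 0 \<le> s \<Longrightarrow> u s \<le> v s" "0 \<le> r"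
  shows "sol_map k e u r \<le> sol_map k e v r"
proof -
  have "(prim ^^ 6) (forcing v) r \<le> (prim ^^ 6) (forcing u) r"
    using assms by (intro funpow_prim_mono forcing_antimono) auto
  then show ?thesis
    using assms(5) by (simp add: sol_map_def divide_right_mono)
qed

lemma sol_map_antimono_param: "e1 \<le> e2 \<Longrightarrow> sol_map k e2 u r \<le> sol_map k e1 u r"
  by (simp add: sol_map_def free_sol_def mult_right_mono)

lemma int_sol_smooth:
  assumes "int_sol k e u"
  shows "smooth_fun u"
proof -
  have fixed: "sol_map k e u = u" and pos: "\<And>s. 0 < u s" and cont: "continuous_on UNIV u"
    using int_solD[OF assms] by auto
  have "cont_diff m u" for m
  proof (induction m)
    case (Suc m)
    have "cont_diff (m + 5) u"
      using cont_diff_sol_map[OF cont_diff_forcing[OF Suc pos], of k e] fixed by simp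
    then show ?case
      by (rule cont_diff_le) simp
  qed (use cont in simp)
  then show ?thesis
    by (simp add: smooth_fun_iff_cont_diff)
qed

lemma int_sol_even_smooth: "int_sol k e u \<Longrightarrow> even_smooth u"
  using int_sol_smooth int_solD by unfold_locales

lemma int_sol_continuous_on_forcing: "int_sol k e u \<Longrightarrow> continuous_on UNIV (forcing u)"
  using int_solD by (blast intro: continuous_on_forcing)

lemma int_sol_radial_deriv:
  assumes "int_sol k e u" "j \<le> 6"
  shows "radial_deriv u j = sol_deriv k e u j"
  using assms(2)
proof (induction j)
  case 0
  have "r * u r = sol_deriv k e u 0 r" for r
    using times_sol_map[of r k e u] int_solD(4)[OF assms(1)] by simp
  then show ?case
    by (simp add: radial_deriv_def fun_eq_iff)
next
  case (Suc j)
  interpret even_smooth u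
    using assms(1) by (rule int_sol_even_smooth)
  have "radial_deriv u (Suc j) = deriv (radial_deriv u j)"
    using has_real_derivative_radial_deriv DERIV_imp_deriv by (metis ext)
  also have "\<dots> = deriv (sol_deriv k e u j)"
    using Suc by simp
  also have "\<dots> = sol_deriv k e u (Suc j)"
    using has_real_derivative_sol_deriv[OF int_sol_continuous_on_forcing[OF assms(1)]] Suc.prems
      DERIV_imp_deriv by (metis ext Suc_le_eq)
  finally show ?case .
qed

lemma int_sol_imp_pos_entire_radial_sol:
  assumes "int_sol k e u"
  shows "pos_entire_radial_sol k e u"
proof -
  interpret even_smooth u
    using assms by (rule int_sol_even_smooth)
  interpret u1: even_smooth "rlap u"
    by (rule even_smooth_rlap)
  interpret u2: even_smooth "rlap (rlap u)"
    by (rule u1.even_smooth_rlap)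
  have initial: "radial_deriv u j 0 = free_deriv k e j 0" if "j < 6" for j
    using int_sol_radial_deriv[OF assms, of j] sol_deriv_at_0[OF that] that by simp
  have "r * rlap (rlap (rlap u)) r = - forcing u r" for r
    using int_sol_radial_deriv[OF assms, of 6] sol_deriv_6 by (simp add: radial_deriv_6 fun_eq_iff)
  then have "r * rlap (rlap (rlap u)) r = r * (- 1 / u r ^ 3)" for r
    by (simp add: forcing_def)
  then have "rlap (rlap (rlap u)) r = - 1 / u r ^ 3" if "r > 0" for r
    using that mult_left_cancel[of r] by (metis less_irrefl)
  moreover have "u 0 = k"
    using int_solD(4)[OF assms, of 0] by simp
  ultimately show ?thesis
    using smooth even initial[of 3] initial[of 5] deriv_0 u1.deriv_0 u2.deriv_0
      int_solD(2)[OF assms]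
    by (simp add: pos_entire_radial_sol_def free_deriv_at_0 radial_deriv_at_0_numeral)
qed

lemma vanishing_derivatives_imp_zero:
  assumes "\<And>i x. i < n \<Longrightarrow> (E i has_real_derivative E (Suc i) x) (at x)"
    and "\<And>x. E n x = 0" and "\<And>i. i < n \<Longrightarrow> E i 0 = 0"
  shows "E 0 x = 0"
  using assms
proof (induction n arbitrary: E x)
  case (Suc n)
  have "E 1 y = 0" for y
    using Suc.IH[of "\<lambda>i. E (Suc i)" y] Suc.prems by auto
  then have "E 0 x = E 0 0"
    using Suc.prems(1)[of 0] by (metis DERIV_isconst_all One_nat_def zero_less_Suc)
  then show ?case
    using Suc.prems(3)[of 0] by simp
qed simp

lemma pos_entire_radial_sol_radial_deriv_6:
  assumes "pos_entire_radial_sol k e u"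
  shows "radial_deriv u 6 r = - forcing u r"
proof -
  have even: "\<And>r. u (- r) = u r"
    and ode: "\<And>r. r > 0 \<Longrightarrow> rlap (rlap (rlap u)) r = - 1 / u r ^ 3"
    and "even_smooth u"
    using assms unfolding pos_entire_radial_sol_def by (auto intro: even_smooth.intro)
  interpret u3: even_smooth "rlap (rlap (rlap u))"
    using even_smooth.even_smooth_funpow_rlap[OF \<open>even_smooth u\<close>, of 3]
    by (simp add: numeral_eq_Suc)
  have "r * rlap (rlap (rlap u)) r = - forcing u r"
  proof (cases r "0::real" rule: linorder_cases)
    case less
    have "rlap (rlap (rlap u)) r = rlap (rlap (rlap u)) (- r)"
      by (simp add: u3.even)
    also have "\<dots> = - 1 / u r ^ 3"
      using ode[of "- r"] less even[of r] by simp
    finally show ?thesis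
      by (simp add: forcing_def)
  next
    case greater
    then show ?thesis
      using ode[OF greater] by (simp add: forcing_def)
  qed (simp add: forcing_def)
  then show ?thesis
    by (simp add: radial_deriv_6)
qed

lemma pos_entire_radial_sol_imp_int_sol:
  assumes "pos_entire_radial_sol k e u"
  shows "int_sol k e u"
proof -
  have smooth: "smooth_fun u" and even: "\<And>r. u (- r) = u r" and pos: "\<And>r. 0 < u r"
    and initial: "u 0 = k" "rlap u 0 = - e" "rlap (rlap u) 0 = 1"
    using assms unfolding pos_entire_radial_sol_def by auto
  interpret even_smooth u
    using smooth even by unfold_locales
  have cont: "continuous_on UNIV u"
    using smooth by (simp add: smooth_fun_iff_cont_diff cont_diff_imp_continuous_on)
  define E where "E j r = radial_deriv u j r - sol_deriv k e u j r" for j r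
  have E': "(E i has_real_derivative E (Suc i) x) (at x)" if "i < 6" for i x
    unfolding E_def
    by (intro DERIV_diff has_real_derivative_radial_deriv
        has_real_derivative_sol_deriv[OF continuous_on_forcing[OF cont pos] that])
  have E6: "E 6 r = 0" for r
    using pos_entire_radial_sol_radial_deriv_6[OF assms] by (simp add: E_def sol_deriv_6)
  have E0: "E i 0 = 0" if "i < 6" for i
  proof -
    have "i = 0 \<or> i = 1 \<or> i = 2 \<or> i = 3 \<or> i = 4 \<or> i = 5"
      using that by auto
    then show ?thesis
      using initial that
      by (elim disjE)
         (simp_all add: E_def radial_deriv_at_0_numeral sol_deriv_at_0 free_deriv_at_0
           flip: One_nat_def)
  qed
  have "E 0 r = 0" for r
    using vanishing_derivatives_imp_zero[of 6 E, OF E' E6 E0] by simp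
  then have "r * u r = r * sol_map k e u r" for r
    by (simp add: E_def radial_deriv_def times_sol_map)
  then have "u r = sol_map k e u r" for r
    using initial(1) by (cases "r = 0") auto
  then show ?thesis
    unfolding int_sol_def using even pos cont by blast
qed

lemma pos_entire_radial_sol_iff_int_sol: "pos_entire_radial_sol k e u \<longleftrightarrow> int_sol k e u"
  using int_sol_imp_pos_entire_radial_sol pos_entire_radial_sol_imp_int_sol by blast

section \<open>Passing to the limit in the integral equation\<close>

definition locally_bounded_convergence :: "(nat \<Rightarrow> real \<Rightarrow> real) \<Rightarrow> (real \<Rightarrow> real) \<Rightarrow> bool" where
  "locally_bounded_convergence f g \<longleftrightarrow>
     (\<forall>n. continuous_on UNIV (f n)) \<and> (\<forall>R. \<exists>C. \<forall>n x. \<bar>x\<bar> \<le> R \<longrightarrow> \<bar>f n x\<bar> \<le> C) \<and>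
     (\<forall>x. (\<lambda>n. f n x) \<longlonglongrightarrow> g x)"

lemma locally_bounded_convergence_integral:
  assumes "locally_bounded_convergence f g" "{a..b} \<subseteq> {-R..R}"
  shows "g integrable_on {a..b}" and "(\<lambda>n. integral {a..b} (f n)) \<longlonglongrightarrow> integral {a..b} g"
proof -
  obtain C where C: "\<And>n x. \<bar>x\<bar> \<le> R \<Longrightarrow> \<bar>f n x\<bar> \<le> C"
    using assms(1) unfolding locally_bounded_convergence_def by blast
  have f: "f n integrable_on {a..b}" for n
    using assms(1) unfolding locally_bounded_convergence_def
    by (meson integrable_continuous_real continuous_on_subset subset_UNIV)
  have bound: "norm (f n x) \<le> C" if "x \<in> {a..b}" for n x
    using C that assms(2) by force
  have lim: "(\<lambda>n. f n x) \<longlonglongrightarrow> g x" for x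
    using assms(1) unfolding locally_bounded_convergence_def by blast
  show "g integrable_on {a..b}"
    by (rule dominated_convergence(1)[OF f integrable_const_ivl bound lim])
  show "(\<lambda>n. integral {a..b} (f n)) \<longlonglongrightarrow> integral {a..b} g"
    by (rule dominated_convergence(2)[OF f integrable_const_ivl bound lim])
qed

lemma locally_bounded_convergence_imp_locally_integrable:
  assumes "locally_bounded_convergence f g"
  shows "locally_integrable g"
  unfolding locally_integrable_def
proof (intro allI)
  show "g integrable_on {a..b}" for a b
    by (rule locally_bounded_convergence_integral(1)[OF assms, of a b "\<bar>a\<bar> + \<bar>b\<bar>"]) auto
qed

lemma locally_bounded_convergence_prim:
  assumes conv: "locally_bounded_convergence f g"
  shows "locally_bounded_convergence (\<lambda>n. prim (f n)) (prim g)"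
proof -
  have cont: "continuous_on UNIV (f n)" for n
    using conv unfolding locally_bounded_convergence_def by blast
  have "\<exists>C. \<forall>n x. \<bar>x\<bar> \<le> R \<longrightarrow> \<bar>prim (f n) x\<bar> \<le> C" for R
  proof -
    obtain C where C: "\<And>n x. \<bar>x\<bar> \<le> R \<Longrightarrow> \<bar>f n x\<bar> \<le> C"
      using conv unfolding locally_bounded_convergence_def by blast
    have "\<bar>prim (f n) x\<bar> \<le> \<bar>C\<bar> * \<bar>R\<bar>" if "\<bar>x\<bar> \<le> R" for n x
    proof -
      have "\<bar>prim (f n) x\<bar> \<le> \<bar>C\<bar> * \<bar>x\<bar>"
        by (rule abs_prim_le[OF cont]) (meson C that abs_ge_self order_trans)
      also have "\<dots> \<le> \<bar>C\<bar> * \<bar>R\<bar>"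
        using that by (intro mult_left_mono) auto
      finally show ?thesis .
    qed
    then show ?thesis
      by blast
  qed
  moreover have "(\<lambda>n. prim (f n) x) \<longlonglongrightarrow> prim g x" for x
    using locally_bounded_convergence_integral(2)[OF conv, of 0 x "\<bar>x\<bar>"]
      locally_bounded_convergence_integral(2)[OF conv, of x 0 "\<bar>x\<bar>"]
    by (cases "0 \<le> x") (auto simp: prim_def intro: tendsto_minus)
  ultimately show ?thesis
    using continuous_on_prim[OF continuous_on_imp_locally_integrable[OF cont]]
    unfolding locally_bounded_convergence_def by blast
qed

lemma locally_bounded_convergence_funpow_prim:
  "locally_bounded_convergence f g \<Longrightarrow>
     locally_bounded_convergence (\<lambda>n. (prim ^^ j) (f n)) ((prim ^^ j) g)"
  by (induction j) (auto dest: locally_bounded_convergence_prim)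

lemma uniformly_positive_limit:
  fixes z :: "nat \<Rightarrow> real \<Rightarrow> real"
  assumes lower: "\<And>R. \<exists>\<delta>>0. \<forall>n s. \<bar>s\<bar> \<le> R \<longrightarrow> \<delta> \<le> z n s"
    and lim: "(\<lambda>n. z n r) \<longlonglongrightarrow> l"
  shows "0 < l"
proof -
  obtain \<delta> where "\<delta> > 0" "\<forall>n t. \<bar>t\<bar> \<le> \<bar>r\<bar> \<longrightarrow> \<delta> \<le> z n t"
    using lower[of "\<bar>r\<bar>"] by blast
  moreover from this have "\<delta> \<le> l"
    by (intro LIMSEQ_le_const[OF lim]) auto
  ultimately show ?thesis
    by simp
qed

lemma locally_bounded_convergence_forcing:
  assumes cont: "\<And>n. continuous_on UNIV (z n)"
    and lower: "\<And>R. \<exists>\<delta>>0. \<forall>n s. \<bar>s\<bar> \<le> R \<longrightarrow> \<delta> \<le> z n s"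
    and lim: "\<And>r. (\<lambda>n. z n r) \<longlonglongrightarrow> z' r"
  shows "locally_bounded_convergence (\<lambda>n. forcing (z n)) (forcing z')"
  unfolding locally_bounded_convergence_def
proof (intro conjI allI)
  have pos: "0 < z n s" for n s
  proof -
    obtain \<delta> where "\<delta> > 0" "\<forall>m t. \<bar>t\<bar> \<le> \<bar>s\<bar> \<longrightarrow> \<delta> \<le> z m t"
      using lower[of "\<bar>s\<bar>"] by blast
    then show ?thesis
      using order_less_le_trans by blast
  qed
  show "continuous_on UNIV (forcing (z n))" for n
    using cont pos by (rule continuous_on_forcing)
  show "(\<lambda>n. forcing (z n) x) \<longlonglongrightarrow> forcing z' x" for x
    unfolding forcing_def using uniformly_positive_limit[OF lower lim, of x]
    by (auto intro!: tendsto_intros lim)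
  show "\<exists>C. \<forall>n x. \<bar>x\<bar> \<le> R \<longrightarrow> \<bar>forcing (z n) x\<bar> \<le> C" for R
  proof -
    obtain \<delta> where \<delta>: "\<delta> > 0" "\<And>n s. \<bar>s\<bar> \<le> R \<Longrightarrow> \<delta> \<le> z n s"
      using lower[of R] by blast
    have "\<bar>forcing (z n) x\<bar> \<le> \<bar>R\<bar> / \<delta> ^ 3" if "\<bar>x\<bar> \<le> R" for n x
    proof -
      have "\<delta> ^ 3 \<le> z n x ^ 3"
        using \<delta> that by (intro power_mono) auto
      then have "\<bar>x\<bar> / z n x ^ 3 \<le> \<bar>R\<bar> / \<delta> ^ 3"
        using \<delta> that by (intro frac_le) auto
      then show ?thesis
        using pos[of n x] by (simp add: forcing_def abs_divide)
    qed
    then show ?thesis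
      by blast
  qed
qed

lemma int_sol_limit:
  assumes cont: "\<And>n. continuous_on UNIV (z n)" and even: "\<And>n r. z n (- r) = z n r"
    and lower: "\<And>R. \<exists>\<delta>>0. \<forall>n s. \<bar>s\<bar> \<le> R \<longrightarrow> \<delta> \<le> z n s"
    and lim: "\<And>r. (\<lambda>n. z n r) \<longlonglongrightarrow> z' r"
    and lim_sol_map: "\<And>r. (\<lambda>n. sol_map k (e n) (z n) r) \<longlonglongrightarrow> z' r"
    and lim_param: "e \<longlonglongrightarrow> e'"
  shows "int_sol k e' z'"
proof -
  note conv = locally_bounded_convergence_forcing[OF cont lower lim]
  then have li: "locally_integrable (forcing z')"
    by (rule locally_bounded_convergence_imp_locally_integrable)
  have lim6: "(\<lambda>n. (prim ^^ 6) (forcing (z n)) r) \<longlonglongrightarrow> (prim ^^ 6) (forcing z') r" for r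
    using locally_bounded_convergence_funpow_prim[OF conv, of 6]
    unfolding locally_bounded_convergence_def by blast
  have "(\<lambda>n. sol_map k (e n) (z n) r) \<longlonglongrightarrow> sol_map k e' z' r" for r
  proof (cases "r = 0")
    case False
    have "(\<lambda>n. free_sol k (e n) r - (prim ^^ 6) (forcing (z n)) r / r)
        \<longlonglongrightarrow> free_sol k e' r - (prim ^^ 6) (forcing z') r / r"
      unfolding free_sol_def by (intro tendsto_intros lim6 lim_param) (use False in auto)
    then show ?thesis
      using False by (simp add: sol_map_def)
  qed simp
  then have fixed: "z' r = sol_map k e' z' r" for r
    using LIMSEQ_unique[OF lim_sol_map] by blast
  then have "z' = sol_map k e' z'"
    by (rule ext)
  then have "continuous_on UNIV z'"
    using continuous_on_sol_map[OF li, of k e'] by metis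
  moreover have "z' (- r) = z' r" for r
    using LIMSEQ_unique[OF lim[of "- r"]] lim[of r] even by simp
  moreover have "0 < z' r" for r
    using uniformly_positive_limit[OF lower lim] .
  ultimately show ?thesis
    using fixed by (simp add: int_sol_def)
qed

section \<open>Monotone iteration below the free solution\<close>

definition int_subsol :: "real \<Rightarrow> real \<Rightarrow> (real \<Rightarrow> real) \<Rightarrow> bool" where
  "int_subsol k e w \<longleftrightarrow>
     continuous_on UNIV w \<and> (\<forall>r. w (- r) = w r) \<and> (\<forall>r. 0 < w r) \<and> (\<forall>r\<ge>0. w r \<le> sol_map k e w r)"

definition sol_iterate :: "real \<Rightarrow> real \<Rightarrow> nat \<Rightarrow> real \<Rightarrow> real" where
  "sol_iterate k e n = (sol_map k e ^^ n) (free_sol k e)"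

definition max_sol :: "real \<Rightarrow> real \<Rightarrow> real \<Rightarrow> real" where
  "max_sol k e r = lim (\<lambda>n. sol_iterate k e n r)"

lemma int_sol_imp_int_subsol_le_param:
  assumes "int_sol k e' u" "e \<le> e'"
  shows "int_subsol k e u"
proof -
  have "u r \<le> sol_map k e u r" for r
    using int_solD(4)[OF assms(1), of r] sol_map_antimono_param[OF assms(2), of k u r] by simp
  then show ?thesis
    using int_solD[OF assms(1)] by (simp add: int_subsol_def)
qed

lemma even_le_even:
  fixes f g :: "real \<Rightarrow> real"
  assumes "\<And>r. f (- r) = f r" "\<And>r. g (- r) = g r" "\<And>r. 0 \<le> r \<Longrightarrow> f r \<le> g r"
  shows "f r \<le> g r"
  using assms(3)[of r] assms(3)[of "- r"] assms(1,2)[of r] by (cases "0 \<le> r") auto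

lemma sol_iterate_Suc: "sol_iterate k e (Suc n) = sol_map k e (sol_iterate k e n)"
  by (simp add: sol_iterate_def)

lemma int_subsol_le_sol_map:
  assumes "int_subsol k e w" "continuous_on UNIV v" "\<And>r. v (- r) = v r" "\<And>r. w r \<le> v r"
  shows "w r \<le> sol_map k e v r"
proof -
  have w_cont: "continuous_on UNIV w" and w_even: "\<And>r. w (- r) = w r"
    and w_pos: "\<And>r. 0 < w r" and w_sub: "\<And>r. 0 \<le> r \<Longrightarrow> w r \<le> sol_map k e w r"
    using assms(1) by (auto simp: int_subsol_def)
  have v_pos: "0 < v r" for r
    using assms(4) w_pos order_less_le_trans by blast
  show ?thesis
  proof (rule even_le_even[of w _ r])
    fix r :: real
    assume r: "0 \<le> r"
    have "w r \<le> sol_map k e w r"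
      using w_sub[OF r] .
    also have "\<dots> \<le> sol_map k e v r"
      using locally_integrable_forcing[OF w_cont w_pos] locally_integrable_forcing[OF assms(2) v_pos]
        w_pos assms(4) r by (rule sol_map_mono)
    finally show "w r \<le> sol_map k e v r" .
  qed (use w_even sol_map_even[of v, OF assms(3)] in auto)
qed

lemma sol_iterate_invariant:
  assumes "int_subsol k e w"
  shows "continuous_on UNIV (sol_iterate k e n) \<and> (\<forall>r. sol_iterate k e n (- r) = sol_iterate k e n r)
    \<and> (\<forall>r. w r \<le> sol_iterate k e n r) \<and> (\<forall>r\<ge>0. sol_iterate k e (Suc n) r \<le> sol_iterate k e n r)"
proof -
  have w_cont: "continuous_on UNIV w" and w_even: "\<And>r. w (- r) = w r"
    and w_pos: "\<And>r. 0 < w r" and w_sub: "\<And>r. 0 \<le> r \<Longrightarrow> w r \<le> sol_map k e w r"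
    using assms by (auto simp: int_subsol_def)
  have w_li: "locally_integrable (forcing w)"
    using w_cont w_pos by (rule locally_integrable_forcing)
  show ?thesis
  proof (induction n)
    case 0
    have "w r \<le> free_sol k e r" if "0 \<le> r" for r
      using w_sub[OF that] sol_map_le_free_sol[OF w_li _ that, of k e] w_pos by force
    then have w_le: "w r \<le> free_sol k e r" for r
      by (rule even_le_even[of w "free_sol k e", rotated 2]) (simp_all add: w_even free_sol_def)
    then have "0 < free_sol k e r" for r
      using w_pos order_less_le_trans by blast
    then have "sol_map k e (free_sol k e) r \<le> free_sol k e r" if "0 \<le> r" for r
      using sol_map_le_free_sol[OF locally_integrable_forcing[OF continuous_on_free_sol] _ that]
      by blast
    then show ?case
      using w_le continuous_on_free_sol by (simp add: sol_iterate_def free_sol_def)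
  next
    case (Suc n)
    define v where "v = sol_iterate k e n"
    have v_cont: "continuous_on UNIV v" and v_even: "\<And>r. v (- r) = v r"
      and w_le_v: "\<And>r. w r \<le> v r" and v_dec: "\<And>r. 0 \<le> r \<Longrightarrow> sol_map k e v r \<le> v r"
      using Suc by (auto simp: v_def sol_iterate_Suc)
    have v_pos: "0 < v r" for r
      using w_le_v w_pos order_less_le_trans by blast
    have v_li: "locally_integrable (forcing v)"
      using v_cont v_pos by (rule locally_integrable_forcing)
    have v'_cont: "continuous_on UNIV (sol_map k e v)"
      using v_li by (rule continuous_on_sol_map)
    have v'_even: "sol_map k e v (- r) = sol_map k e v r" for r
      using v_even by (rule sol_map_even)
    have w_le_v': "w r \<le> sol_map k e v r" for r
      using assms v_cont v_even w_le_v by (rule int_subsol_le_sol_map)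
    have "0 < sol_map k e v r" for r
      using w_le_v' w_pos order_less_le_trans by blast
    then have "sol_map k e (sol_map k e v) r \<le> sol_map k e v r" if "0 \<le> r" for r
      using sol_map_mono[OF locally_integrable_forcing[OF v'_cont] v_li _ _ that] v_dec by auto
    then show ?case
      using v'_cont v'_even w_le_v' by (simp add: v_def sol_iterate_Suc)
  qed
qed

lemma tendsto_max_sol:
  assumes "int_subsol k e w"
  shows "(\<lambda>n. sol_iterate k e n r) \<longlonglongrightarrow> max_sol k e r"
proof -
  note inv = sol_iterate_invariant[OF assms]
  have "decseq (\<lambda>n. sol_iterate k e n \<bar>r\<bar>)"
    using inv by (intro decseq_SucI) auto
  moreover have "\<forall>n. w \<bar>r\<bar> \<le> sol_iterate k e n \<bar>r\<bar>"
    using inv by blast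
  ultimately have "convergent (\<lambda>n. sol_iterate k e n \<bar>r\<bar>)"
    using decseq_convergent by (metis convergentI)
  moreover have "sol_iterate k e n \<bar>r\<bar> = sol_iterate k e n r" for n
    using inv by (cases "0 \<le> r") auto
  ultimately show ?thesis
    by (simp add: convergent_LIMSEQ_iff max_sol_def)
qed

lemma int_subsol_le_max_sol: "int_subsol k e w \<Longrightarrow> w r \<le> max_sol k e r"
  using tendsto_max_sol sol_iterate_invariant by (meson LIMSEQ_le_const)

lemma int_sol_max_sol:
  assumes "int_subsol k e w"
  shows "int_sol k e (max_sol k e)"
proof (rule int_sol_limit[where z="sol_iterate k e" and e="\<lambda>_. e"])
  note inv = sol_iterate_invariant[OF assms]
  show "continuous_on UNIV (sol_iterate k e n)" for n
    using inv by blast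
  show "sol_iterate k e n (- r) = sol_iterate k e n r" for n r
    using inv by blast
  show "(\<lambda>n. sol_iterate k e n r) \<longlonglongrightarrow> max_sol k e r" for r
    using assms by (rule tendsto_max_sol)
  then show "(\<lambda>n. sol_map k e (sol_iterate k e n) r) \<longlonglongrightarrow> max_sol k e r" for r
    using LIMSEQ_Suc by (force simp: sol_iterate_Suc)
  show "\<exists>\<delta>>0. \<forall>n s. \<bar>s\<bar> \<le> R \<longrightarrow> \<delta> \<le> sol_iterate k e n s" for R
  proof -
    have w_pos: "\<And>r. 0 < w r" and w_cont: "continuous_on UNIV w"
      using assms by (auto simp: int_subsol_def)
    have "\<exists>x\<in>{-\<bar>R\<bar>..\<bar>R\<bar>}. \<forall>y\<in>{-\<bar>R\<bar>..\<bar>R\<bar>}. w x \<le> w y"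
      by (rule continuous_attains_inf) (auto intro: continuous_on_subset[OF w_cont])
    then obtain x where x: "\<And>y. y \<in> {-\<bar>R\<bar>..\<bar>R\<bar>} \<Longrightarrow> w x \<le> w y"
      by blast
    have "w x \<le> sol_iterate k e n s" if "\<bar>s\<bar> \<le> R" for n s
    proof -
      have "w x \<le> w s"
        using that by (intro x) auto
      also have "\<dots> \<le> sol_iterate k e n s"
        using inv by blast
      finally show ?thesis .
    qed
    then show ?thesis
      using w_pos[of x] by blast
  qed
qed (rule tendsto_const)

section \<open>A priori bounds for positive solutions\<close>

context
  fixes h :: "real \<Rightarrow> real"
  assumes cont: "continuous_on UNIV h" and nonneg: "\<And>s. 0 \<le> s \<Longrightarrow> 0 \<le> h s"
begin

lemma funpow_prim_increasing:
  assumes "0 \<le> x" "x \<le> y"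
  shows "(prim ^^ Suc j) h x \<le> (prim ^^ Suc j) h y"
  by (rule DERIV_nonneg_imp_nondecreasing[OF assms(2)])
     (use has_real_derivative_funpow_prim[OF cont] assms
        funpow_prim_nonneg[OF continuous_on_imp_locally_integrable[OF cont] nonneg] in force)

lemma funpow_prim_le_times:
  assumes "0 \<le> x"
  shows "(prim ^^ Suc (Suc j)) h x \<le> x * (prim ^^ Suc j) h x"
proof -
  define G where "G y = y * (prim ^^ Suc j) h x - (prim ^^ Suc (Suc j)) h y" for y
  have "G 0 \<le> G x"
  proof (rule DERIV_nonneg_imp_nondecreasing[OF assms])
    fix y
    assume y: "0 \<le> y" "y \<le> x"
    have "(G has_real_derivative (prim ^^ Suc j) h x - (prim ^^ Suc j) h y) (at y)"
      unfolding G_def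
      by (auto intro!: derivative_eq_intros has_real_derivative_funpow_prim[OF cont]
               simp del: funpow.simps)
    moreover have "0 \<le> (prim ^^ Suc j) h x - (prim ^^ Suc j) h y"
      using funpow_prim_increasing[OF y] by simp
    ultimately show "\<exists>d. (G has_real_derivative d) (at y) \<and> 0 \<le> d"
      by blast
  qed
  then show ?thesis
    by (simp add: G_def funpow_prim_at_0 del: funpow.simps)
qed

lemma funpow_prim_le_shift:
  assumes "0 \<le> x"
  shows "(prim ^^ Suc j) h x \<le> (prim ^^ Suc (Suc j)) h (x + 1)"
proof -
  define G where "G y = (prim ^^ Suc (Suc j)) h y - (y - x) * (prim ^^ Suc j) h x" for y
  have "G x \<le> G (x + 1)"
  proof (rule DERIV_nonneg_imp_nondecreasing[of x "x + 1"])
    fix y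
    assume y: "x \<le> y" "y \<le> x + 1"
    have "(G has_real_derivative (prim ^^ Suc j) h y - (prim ^^ Suc j) h x) (at y)"
      unfolding G_def
      by (auto intro!: derivative_eq_intros has_real_derivative_funpow_prim[OF cont]
               simp del: funpow.simps)
    moreover have "0 \<le> (prim ^^ Suc j) h y - (prim ^^ Suc j) h x"
      using funpow_prim_increasing[OF assms y(1)] by simp
    ultimately show "\<exists>d. (G has_real_derivative d) (at y) \<and> 0 \<le> d"
      by blast
  qed simp
  then show ?thesis
    using funpow_prim_nonneg[OF continuous_on_imp_locally_integrable[OF cont] nonneg assms,
        of "Suc (Suc j)"]
    by (simp add: G_def del: funpow.simps)
qed

lemma funpow_prim_le_power:
  assumes "0 \<le> y" "y \<le> x"
  shows "(prim ^^ Suc j) h y \<le> y ^ j / fact j * prim h x"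
  using assms
proof (induction j arbitrary: y)
  case 0
  then show ?case
    using funpow_prim_increasing[of y x 0] by simp
next
  case (Suc j)
  define G where "G t = t ^ Suc j * (prim h x / fact (Suc j)) - (prim ^^ Suc (Suc j)) h t" for t
  have "G 0 \<le> G y"
  proof (rule DERIV_nonneg_imp_nondecreasing[OF Suc.prems(1)])
    fix t
    assume t: "0 \<le> t" "t \<le> y"
    have "(G has_real_derivative
        real (Suc j) * t ^ j * (prim h x / fact (Suc j)) - (prim ^^ Suc j) h t) (at t)"
      unfolding G_def
      by (intro DERIV_diff DERIV_cmult_right has_real_derivative_funpow_prim[OF cont])
         (use DERIV_pow[of "Suc j" t] in simp)
    moreover have "real (Suc j) * t ^ j * (prim h x / fact (Suc j)) = t ^ j / fact j * prim h x"
      by (simp add: fact_Suc field_simps del: of_nat_Suc)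
    moreover have "(prim ^^ Suc j) h t \<le> t ^ j / fact j * prim h x"
      using Suc.IH[of t] t Suc.prems by simp
    ultimately show "\<exists>d. (G has_real_derivative d) (at t) \<and> 0 \<le> d"
      by force
  qed
  then show ?case
    by (simp add: G_def funpow_prim_at_0 del: funpow.simps)
qed

end

lemma int_sol_funpow_prim_forcing:
  assumes "int_sol k e u" "x \<noteq> 0"
  shows "(prim ^^ 6) (forcing u) x = x * (free_sol k e x - u x)"
  using int_solD(4)[OF assms(1), of x] assms(2) by (simp add: sol_map_def field_simps)

lemma int_sol_forcing_nonneg: "int_sol k e u \<Longrightarrow> 0 \<le> s \<Longrightarrow> 0 \<le> forcing u s"
  using int_solD(2) forcing_nonneg by blast

lemma int_sol_prim_forcing_le:
  assumes u: "int_sol k e u" and "0 \<le> e" "0 \<le> x" "x \<le> R"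
  shows "prim (forcing u) x \<le> (R + 5) * (k + (R + 5) ^ 4 / 120)"
proof -
  note h = int_sol_continuous_on_forcing[OF u] int_sol_forcing_nonneg[OF u]
  have "prim (forcing u) x \<le> prim (forcing u) R"
    using funpow_prim_increasing[OF h, of x R 0] assms by simp
  also have "\<dots> \<le> (prim ^^ Suc j) (forcing u) (R + real j)" for j
  proof (induction j)
    case (Suc j)
    have "(prim ^^ Suc j) (forcing u) (R + real j)
        \<le> (prim ^^ Suc (Suc j)) (forcing u) (R + real (Suc j))"
      using funpow_prim_le_shift[OF h, of "R + real j" j] assms
      by (simp add: algebra_simps del: funpow.simps)
    with Suc.IH show ?case
      by (rule order_trans)
  qed simp
  from this[of 5] have "prim (forcing u) R \<le> (prim ^^ 6) (forcing u) (R + 5)"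
    by (simp add: numeral_eq_Suc)
  also have "\<dots> = (R + 5) * (free_sol k e (R + 5) - u (R + 5))"
    using assms by (intro int_sol_funpow_prim_forcing) auto
  also have "\<dots> \<le> (R + 5) * (k + (R + 5) ^ 4 / 120)"
  proof -
    have "0 \<le> e * (R + 5) ^ 2"
      using assms by simp
    then have "free_sol k e (R + 5) - u (R + 5) \<le> k + (R + 5) ^ 4 / 120"
      using int_solD(2)[OF u, of "R + 5"] by (simp add: free_sol_def)
    then show ?thesis
      using assms by (intro mult_left_mono) auto
  qed
  finally show ?thesis .
qed

lemma int_sol_has_real_derivative_le:
  assumes u: "int_sol k e u" and "0 \<le> e" "0 < x"
  obtains d where "(u has_real_derivative d) (at x)" "d \<le> x ^ 3 / 30"
proof
  note h = int_sol_continuous_on_forcing[OF u] int_sol_forcing_nonneg[OF u]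
  define A where "A j = (prim ^^ j) (forcing u) x" for j
  have "((prim ^^ Suc 5) (forcing u) has_real_derivative A 5) (at x)"
    unfolding A_def by (rule has_real_derivative_funpow_prim[OF h(1)])
  then have "((\<lambda>y. free_sol k e y - (prim ^^ 6) (forcing u) y / y) has_real_derivative
      - e * x / 3 + x ^ 3 / 30 - (A 5 * x - A 6) / x ^ 2) (at x)"
    unfolding free_sol_def A_def using assms
    by (auto intro!: derivative_eq_intros simp del: funpow.simps
             simp: field_simps power2_eq_square power3_eq_cube numeral_eq_Suc)
  then show "(u has_real_derivative - e * x / 3 + x ^ 3 / 30 - (A 5 * x - A 6) / x ^ 2) (at x)"
  proof (rule has_field_derivative_transform_within_open[where S="{0<..}"])
    show "free_sol k e y - (prim ^^ 6) (forcing u) y / y = u y" if "y \<in> {0<..}" for y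
      using int_solD(4)[OF u, of y] that by (simp add: sol_map_def)
  qed (use assms in auto)
  have "A (Suc (Suc 4)) \<le> x * A (Suc 4)"
    unfolding A_def using funpow_prim_le_times[OF h, of x 4] assms by simp
  then have "0 \<le> (A 5 * x - A 6) / x ^ 2"
    by (simp add: numeral_eq_Suc algebra_simps)
  moreover have "- e * x / 3 \<le> 0"
    using assms by simp
  ultimately show "- e * x / 3 + x ^ 3 / 30 - (A 5 * x - A 6) / x ^ 2 \<le> x ^ 3 / 30"
    by linarith
qed

lemma int_sol_growth_le:
  assumes u: "int_sol k e u" and "0 \<le> e" "0 \<le> r0" "r0 \<le> s" "s \<le> R"
  shows "u s \<le> u r0 + R ^ 3 / 30 * (s - r0)"
proof -
  define f where "f y = u r0 + R ^ 3 / 30 * (y - r0) - u y" for y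
  have "f r0 \<le> f s"
  proof (rule DERIV_nonneg_imp_increasing_open[OF assms(4)])
    fix y
    assume y: "r0 < y" "y < s"
    obtain d where d: "(u has_real_derivative d) (at y)" "d \<le> y ^ 3 / 30"
      using int_sol_has_real_derivative_le[OF u \<open>0 \<le> e\<close>, of y] y assms by auto
    have "(f has_real_derivative R ^ 3 / 30 - d) (at y)"
      unfolding f_def[abs_def] by (auto intro!: derivative_eq_intros d(1))
    moreover have "y ^ 3 \<le> R ^ 3"
      using y assms by (intro power_mono) auto
    ultimately show "\<exists>d. (f has_real_derivative d) (at y) \<and> 0 \<le> d"
      using d(2) by force
  next
    show "continuous_on {r0..s} f"
      unfolding f_def[abs_def]
      by (intro continuous_intros continuous_on_subset[OF int_solD(3)[OF u]]) auto
  qed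
  then show ?thesis
    by (simp add: f_def)
qed

lemma prim_increment_ge:
  assumes "continuous_on UNIV h" "0 \<le> \<tau>" and h: "\<And>y. a \<le> y \<Longrightarrow> y \<le> a + \<tau> \<Longrightarrow> c * (y - a) \<le> h y"
  shows "c * \<tau> ^ 2 / 2 \<le> prim h (a + \<tau>) - prim h a"
proof -
  define K where "K y = prim h y - c * (y - a) ^ 2 / 2" for y
  have "K a \<le> K (a + \<tau>)"
  proof (rule DERIV_nonneg_imp_nondecreasing[of a "a + \<tau>"])
    fix y
    assume "a \<le> y" "y \<le> a + \<tau>"
    moreover have "(K has_real_derivative h y - c * (y - a)) (at y)"
      unfolding K_def[abs_def]
      by (auto intro!: derivative_eq_intros has_real_derivative_prim[OF assms(1)])
    ultimately show "\<exists>d. (K has_real_derivative d) (at y) \<and> 0 \<le> d"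
      using h by fastforce
  qed (use assms in simp)
  then show ?thesis
    by (simp add: K_def)
qed

text \<open>If \<open>u r\<^sub>0 = m\<close> were small, the growth bound would keep \<open>u \<le> 2 m\<close> on an interval of
  length \<open>m / L\<close>, where the forcing \<open>s / u s ^ 3\<close> is then so large that its primitive
  increases by at least \<open>1 / (16 L\<^sup>2 m)\<close>.\<close>

lemma lower_bound_from_growth:
  fixes u :: "real \<Rightarrow> real"
  assumes pos: "\<And>s. 0 < u s" and cont: "continuous_on UNIV u" and "0 \<le> r0" "1 \<le> L"
    and growth: "\<And>s. r0 \<le> s \<Longrightarrow> s \<le> r0 + 1 / 2 \<Longrightarrow> u s \<le> u r0 + L * (s - r0)"
    and bound: "\<And>x. 0 \<le> x \<Longrightarrow> x \<le> r0 + 1 / 2 \<Longrightarrow> prim (forcing u) x \<le> B"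
  shows "min (1 / 2) (1 / (16 * L ^ 2 * B)) \<le> u r0"
proof (cases "L / 2 \<le> u r0")
  case True
  then show ?thesis
    using assms by simp
next
  case False
  define m where "m = u r0"
  define \<tau> where "\<tau> = m / L"
  have m: "0 < m" "m < L / 2"
    using pos False by (simp_all add: m_def)
  then have \<tau>: "0 < \<tau>" "\<tau> < 1 / 2" "L * \<tau> = m"
    using assms by (simp_all add: \<tau>_def pos_divide_less_eq)
  define h where "h = forcing u"
  have h_cont: "continuous_on UNIV h"
    unfolding h_def using cont pos by (rule continuous_on_forcing)
  have forcing_ge: "(y - r0) / (8 * m ^ 3) \<le> h y" if "r0 \<le> y" "y \<le> r0 + \<tau>" for y
  proof -
    have "L * (y - r0) \<le> L * \<tau>"
      using that assms by (intro mult_left_mono) auto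
    then have "u y \<le> 2 * m"
      using growth[of y] that \<tau> by (simp add: m_def)
    then have "u y ^ 3 \<le> 8 * m ^ 3"
      using power_mono[of "u y" "2 * m" 3] pos[of y] by simp
    then have "(y - r0) / (8 * m ^ 3) \<le> (y - r0) / u y ^ 3"
      using pos[of y] that m by (intro divide_left_mono) auto
    also have "\<dots> \<le> y / u y ^ 3"
      using pos[of y] assms by (intro divide_right_mono) (auto intro: less_imp_le)
    finally show ?thesis
      by (simp add: h_def forcing_def)
  qed
  have "1 / (8 * m ^ 3) * \<tau> ^ 2 / 2 \<le> prim h (r0 + \<tau>) - prim h r0"
    using h_cont \<tau> forcing_ge by (intro prim_increment_ge) auto
  moreover have "0 \<le> prim h r0"
    using funpow_prim_nonneg[OF continuous_on_imp_locally_integrable[OF h_cont], of r0 1] assms pos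
    by (simp add: h_def forcing_nonneg)
  moreover have "prim h (r0 + \<tau>) \<le> B"
    using bound[of "r0 + \<tau>"] \<tau> assms by (simp add: h_def)
  ultimately have "\<tau> ^ 2 / (16 * m ^ 3) \<le> B"
    by simp
  moreover have "\<tau> ^ 2 / (16 * m ^ 3) = 1 / (16 * L ^ 2 * m)"
    using m assms by (simp add: \<tau>_def power2_eq_square power3_eq_cube)
  ultimately have "1 / (16 * L ^ 2 * m) \<le> B"
    by simp
  moreover have "0 < 16 * L ^ 2 * m"
    using m assms by simp
  ultimately have "1 \<le> m * (16 * L ^ 2 * B)"
    by (simp add: divide_le_eq ac_simps)
  moreover from this have "0 < 16 * L ^ 2 * B"
    using m zero_less_mult_pos[of m "16 * L ^ 2 * B"] by linarith
  ultimately have "1 / (16 * L ^ 2 * B) \<le> m"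
    by (simp add: divide_le_eq)
  then show ?thesis
    by (simp add: m_def)
qed

lemma int_sol_uniformly_positive:
  assumes "0 < k"
  shows "\<exists>\<delta>>0. \<forall>e u s. int_sol k e u \<longrightarrow> 0 \<le> e \<longrightarrow> \<bar>s\<bar> \<le> R \<longrightarrow> \<delta> \<le> u s"
proof -
  define R' where "R' = \<bar>R\<bar> + 1"
  define L where "L = R' ^ 3 / 30 + 1"
  define B where "B = (R' + 5) * (k + (R' + 5) ^ 4 / 120)"
  have "1 \<le> L" "0 < B"
    using assms by (simp_all add: L_def B_def R'_def add_pos_nonneg)
  have "min (1 / 2) (1 / (16 * L ^ 2 * B)) \<le> u s"
    if u: "int_sol k e u" and "0 \<le> e" "\<bar>s\<bar> \<le> R" for e u s
  proof -
    have "min (1 / 2) (1 / (16 * L ^ 2 * B)) \<le> u \<bar>s\<bar>"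
    proof (rule lower_bound_from_growth[OF int_solD(2,3)[OF u] _ \<open>1 \<le> L\<close>])
      fix t
      assume t: "\<bar>s\<bar> \<le> t" "t \<le> \<bar>s\<bar> + 1 / 2"
      then have "u t \<le> u \<bar>s\<bar> + R' ^ 3 / 30 * (t - \<bar>s\<bar>)"
        using that by (intro int_sol_growth_le[OF u \<open>0 \<le> e\<close>]) (auto simp: R'_def)
      also have "\<dots> \<le> u \<bar>s\<bar> + L * (t - \<bar>s\<bar>)"
        using t by (intro add_left_mono mult_right_mono) (auto simp: L_def)
      finally show "u t \<le> u \<bar>s\<bar> + L * (t - \<bar>s\<bar>)" .
    next
      fix x
      assume "0 \<le> x" "x \<le> \<bar>s\<bar> + 1 / 2"
      then show "prim (forcing u) x \<le> B"
        unfolding B_def using that by (intro int_sol_prim_forcing_le[OF u]) (auto simp: R'_def)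
    qed simp
    then show ?thesis
      using int_solD(1)[OF u, of s] by (cases "0 \<le> s") auto
  qed
  then show ?thesis
    using \<open>1 \<le> L\<close> \<open>0 < B\<close> by (intro exI[of _ "min (1 / 2) (1 / (16 * L ^ 2 * B))"]) auto
qed

section \<open>The set of admissible parameters\<close>

lemma int_sol_le_free_sol:
  assumes u: "int_sol k e u" and "0 \<le> r"
  shows "u r \<le> free_sol k e r"
proof -
  have "sol_map k e u r \<le> free_sol k e r"
    using locally_integrable_forcing[OF int_solD(3)[OF u] int_solD(2)[OF u]] int_solD(2)[OF u]
      assms(2) by (rule sol_map_le_free_sol)
  then show ?thesis
    using int_solD(4)[OF u] by simp
qed

lemma S_set_iff: "e \<in> S_set k \<longleftrightarrow> 0 < e \<and> (\<exists>u. int_sol k e u)"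
  by (simp add: S_set_def pos_entire_radial_sol_iff_int_sol)

lemma S_set_square_bound:
  assumes "e \<in> S_set k"
  shows "5 * e ^ 2 < 6 * k"
proof -
  obtain u where u: "int_sol k e u" and "0 < e"
    using assms by (auto simp: S_set_iff)
  define r where "r = sqrt (10 * e)"
  have "r ^ 2 = 10 * e" "r ^ 4 = 100 * e ^ 2"
    using \<open>0 < e\<close> by (simp_all add: r_def power4_eq_xxxx power2_eq_square)
  then have "free_sol k e r = k - 5 / 6 * e ^ 2"
    by (simp add: free_sol_def power2_eq_square)
  moreover have "0 < u r" "u r \<le> free_sol k e r"
    using int_solD(2)[OF u, of r] int_sol_le_free_sol[OF u, of r] \<open>0 < e\<close> by (simp_all add: r_def)
  ultimately show ?thesis
    by simp
qed

lemma bdd_above_S_set: "bdd_above (S_set k)"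
proof
  show "e \<le> max 1 (6 * k / 5)" if "e \<in> S_set k" for e
  proof (cases "1 \<le> e")
    case True
    then have "e \<le> e ^ 2"
      by (simp add: power2_eq_square)
    then show ?thesis
      using S_set_square_bound[OF that] by simp
  qed simp
qed

lemma int_sol_max_sol_if_S_set:
  assumes "e' \<in> S_set k" "e \<le> e'"
  shows "int_sol k e (max_sol k e)"
proof -
  obtain u where "int_sol k e' u"
    using assms(1) by (auto simp: S_set_iff)
  then show ?thesis
    using assms(2) by (intro int_sol_max_sol int_sol_imp_int_subsol_le_param)
qed

lemma S_set_downward_closed: "e' \<in> S_set k \<Longrightarrow> 0 < e \<Longrightarrow> e \<le> e' \<Longrightarrow> e \<in> S_set k"
  using int_sol_max_sol_if_S_set S_set_iff by blast

lemma max_sol_antimono: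
  assumes "e' \<in> S_set k" "e \<le> e'"
  shows "max_sol k e' r \<le> max_sol k e r"
  using int_sol_max_sol_if_S_set[OF assms(1) order_refl] assms(2)
  by (intro int_subsol_le_max_sol int_sol_imp_int_subsol_le_param)

lemma S_set_increasing_approx_Sup:
  assumes "S_set k \<noteq> {}"
  obtains e where "\<And>n. e n \<in> S_set k" "\<And>n. e n \<le> e (Suc n)" "e \<longlonglongrightarrow> Sup (S_set k)"
proof
  define e' where "e' = Sup (S_set k)"
  obtain e0 where "e0 \<in> S_set k"
    using assms by blast
  then have "0 < e'"
    unfolding e'_def using cSup_upper[OF _ bdd_above_S_set] by (fastforce simp: S_set_def)
  define e where "e n = e' * (1 - 1 / (real n + 2))" for n
  show "e n \<in> S_set k" for n
  proof -
    have "e n < e'"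
      using \<open>0 < e'\<close> by (simp add: e_def)
    then obtain x where "x \<in> S_set k" "e n < x"
      using less_cSup_iff[OF assms bdd_above_S_set] by (auto simp: e'_def)
    moreover have "0 < e n"
      using \<open>0 < e'\<close> by (simp add: e_def)
    ultimately show ?thesis
      using S_set_downward_closed less_imp_le by blast
  qed
  show "e n \<le> e (Suc n)" for n
    using \<open>0 < e'\<close> by (simp add: e_def frac_le)
  have "(\<lambda>n. 1 / (real n + 2)) \<longlonglongrightarrow> 0"
    using LIMSEQ_ignore_initial_segment[OF lim_1_over_n, of 2] by (simp add: add.commute)
  then have "(\<lambda>n. e' * (1 - 1 / (real n + 2))) \<longlonglongrightarrow> e' * (1 - 0)"
    by (intro tendsto_intros)
  then show "e \<longlonglongrightarrow> Sup (S_set k)"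
    by (simp add: e_def[abs_def] e'_def)
qed

lemma Sup_S_set_mem:
  assumes "0 < k" "S_set k \<noteq> {}"
  shows "Sup (S_set k) \<in> S_set k"
proof -
  obtain e where e_mem: "\<And>n. e n \<in> S_set k" and e_mono: "\<And>n. e n \<le> e (Suc n)"
    and e_lim: "e \<longlonglongrightarrow> Sup (S_set k)"
    using S_set_increasing_approx_Sup[OF assms(2)] by blast
  have e_pos: "0 < e n" for n
    using e_mem by (simp add: S_set_iff)
  define U where "U n = max_sol k (e n)" for n
  have U: "int_sol k (e n) (U n)" for n
    unfolding U_def using int_sol_max_sol_if_S_set[OF e_mem order_refl] .
  define U' where "U' r = lim (\<lambda>n. U n r)" for r
  have U_lim: "(\<lambda>n. U n r) \<longlonglongrightarrow> U' r" for r
  proof -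
    have "decseq (\<lambda>n. U n r)"
      unfolding U_def using max_sol_antimono[OF e_mem e_mono] by (intro decseq_SucI)
    moreover have "\<forall>n. 0 \<le> U n r"
      using int_solD(2)[OF U] less_imp_le by blast
    ultimately show ?thesis
      using decseq_convergent by (metis convergentI convergent_LIMSEQ_iff U'_def)
  qed
  have "int_sol k (Sup (S_set k)) U'"
  proof (rule int_sol_limit[OF int_solD(3)[OF U] int_solD(1)[OF U] _ U_lim _ e_lim])
    show "\<exists>\<delta>>0. \<forall>n s. \<bar>s\<bar> \<le> R \<longrightarrow> \<delta> \<le> U n s" for R
    proof -
      obtain \<delta> where "\<delta> > 0" "\<And>e u s. int_sol k e u \<Longrightarrow> 0 \<le> e \<Longrightarrow> \<bar>s\<bar> \<le> R \<Longrightarrow> \<delta> \<le> u s"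
        using int_sol_uniformly_positive[OF assms(1), of R] by blast
      then show ?thesis
        using U e_pos less_imp_le by blast
    qed
    show "(\<lambda>n. sol_map k (e n) (U n) r) \<longlonglongrightarrow> U' r" for r
      using U_lim int_solD(4)[OF U] by simp
  qed
  moreover have "0 < Sup (S_set k)"
    using e_pos[of 0] cSup_upper[OF e_mem bdd_above_S_set] by (meson less_le_trans)
  ultimately show ?thesis
    by (auto simp: S_set_iff)
qed

lemma has_real_derivative_inverse_square_one_plus_square:
  "((\<lambda>s. - 1 / (4 * (1 + s\<^sup>2)\<^sup>2)) has_real_derivative s / (1 + s\<^sup>2) ^ 3) (at s)"
proof -
  have inv: "((\<lambda>x. - 1 / (4 * x\<^sup>2)) has_real_derivative 1 / (2 * x ^ 3)) (at x)"
    if "x \<noteq> 0" for x :: real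
  proof -
    have "((\<lambda>x. - 1 / 4 * inverse (x\<^sup>2)) has_real_derivative
        - 1 / 4 * (- (2 * x * inverse ((x\<^sup>2)\<^sup>2)))) (at x)"
      using that by (auto intro!: derivative_eq_intros simp: power2_eq_square)
    moreover have "- 1 / 4 * (- (2 * x * inverse ((x\<^sup>2)\<^sup>2))) = 1 / (2 * x ^ 3)"
      using that by (simp add: field_simps power2_eq_square power3_eq_cube)
    ultimately show ?thesis
      by (simp add: field_simps)
  qed
  have "0 < 1 + s\<^sup>2"
    by (simp add: add_pos_nonneg)
  then have "((\<lambda>s. - 1 / (4 * (1 + s\<^sup>2)\<^sup>2)) has_real_derivative
      1 / (2 * (1 + s\<^sup>2) ^ 3) * (2 * s)) (at s)"
    by (intro DERIV_chain2[OF inv]) (auto intro!: derivative_eq_intros)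
  then show ?thesis
    by simp
qed

lemma int_subsol_one_plus_square:
  assumes "100 \<le> k"
  shows "int_subsol k 1 (\<lambda>r. 1 + r\<^sup>2)"
proof -
  define w :: "real \<Rightarrow> real" where "w r = 1 + r\<^sup>2" for r
  have w_pos: "0 < w r" for r
    by (simp add: w_def add_pos_nonneg)
  have w_cont: "continuous_on UNIV w"
    unfolding w_def by (intro continuous_intros)
  have h: "continuous_on UNIV (forcing w)" "\<And>s. 0 \<le> s \<Longrightarrow> 0 \<le> forcing w s"
    using continuous_on_forcing[OF w_cont w_pos] w_pos forcing_nonneg by auto
  have prim_le: "prim (forcing w) r \<le> 1 / 4" for r
  proof -
    have "prim (forcing w) r = - 1 / (4 * (1 + r\<^sup>2)\<^sup>2) - (- 1 / (4 * (1 + 0\<^sup>2)\<^sup>2))"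
      using has_real_derivative_inverse_square_one_plus_square
      by (intro prim_eq_diff) (simp add: forcing_def w_def)
    then show ?thesis
      by simp
  qed
  have "w r \<le> sol_map k 1 w r" if "0 < r" for r
  proof -
    have "(prim ^^ Suc 5) (forcing w) r \<le> r ^ 5 / fact 5 * prim (forcing w) r"
      by (rule funpow_prim_le_power[OF h]) (use that in auto)
    also have "\<dots> \<le> r ^ 5 / fact 5 * (1 / 4)"
      using prim_le that by (intro mult_left_mono) auto
    finally have "(prim ^^ 6) (forcing w) r / r \<le> r ^ 4 / 480"
      using that by (simp add: fact_numeral numeral_eq_Suc divide_le_eq power_eq_if
          del: funpow.simps)
    moreover have "0 \<le> (r\<^sup>2 - 280 / 3)\<^sup>2"
      \<comment> \<open>\<open>(r\<^sup>2 - 280/3)\<^sup>2/160 = r\<^sup>4/160 - 7 r\<^sup>2/6 + 490/9\<close>, and \<open>k - 1 \<ge> 490/9\<close>\<close>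
      by simp
    ultimately show ?thesis
      using assms that
      by (simp add: w_def sol_map_def free_sol_def power2_eq_square power4_eq_xxxx algebra_simps)
  qed
  moreover have "w 0 \<le> sol_map k 1 w 0"
    using assms by (simp add: w_def)
  ultimately have "w r \<le> sol_map k 1 w r" if "0 \<le> r" for r
    using that by (cases "r = 0") auto
  then show ?thesis
    using w_pos w_cont by (simp add: int_subsol_def w_def[abs_def])
qed

theorem lemma3:
  shows "\<exists>k0>0. \<forall>k\<ge>k0. S_set k \<noteq> {} \<and> bdd_above (S_set k) \<and>
           (\<exists>u. pos_entire_radial_sol k (Sup (S_set k)) u)"
proof (intro exI[of _ 100] conjI allI impI)
  fix k :: real
  assume "100 \<le> k"
  then have "1 \<in> S_set k"
    using int_sol_max_sol[OF int_subsol_one_plus_square] by (auto simp: S_set_iff)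
  then show "S_set k \<noteq> {}"
    by blast
  show "bdd_above (S_set k)"
    by (rule bdd_above_S_set)
  have "Sup (S_set k) \<in> S_set k"
    using \<open>100 \<le> k\<close> \<open>S_set k \<noteq> {}\<close> by (intro Sup_S_set_mem) auto
  then show "\<exists>u. pos_entire_radial_sol k (Sup (S_set k)) u"
    by (simp add: S_set_def)
qed simp

end
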